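(* Let $k\ge 3$ be an integer and $G$ a 3-connected graph, and let $G''$ be the $\emptyset$-blocked graph of $G$. Then $G''$ is the overlap graph of a family of paths in some tree of maximum degree at most $k$ if and only if $G$ is $k$-colourable. Likewise, $G''$ is the intersection graph of a family of paths in some tree of maximum degree at most $k$ if and only if $G$ is $k$-colourable.
   Context: Paths in a tree are viewed as their node sets. Two sets $a,b$ overlap if $a\cap b\neq\emptyset$, $a\setminus b\neq\emptyset$, $b\setminus a\neq\emptyset$. The overlap (resp. intersection) graph of a family of paths has one vertex per path, two vertices adjacent iff their paths overlap (resp. share a node). The $\emptyset$-blocked graph $G''$ of $G$: let $G'=(V',E')$ be the disjoint union of six copies of $G$. The vertex set of $G''$ is $V_1\cup V_2\cup V_3$ (pairwise disjoint), where $V_1=V'$ (vertex-representatives), $V_2$ contains one new vertex for each edge of $E'$ (edge-representatives), and $V_3=\{f(v): v\in V_1\}$ is a set of new vertices in bijection $f$ with $V_1$ (brothers). Edges of $G''$: $v\in V_1$ is adjacent to the edge-representative of $e\in E'$ iff $v$ is an endpoint of $e$; $V_2\cup V_3$ is a clique; each $v\in V_1$ is adjacent to $f(v)$; no other edges. *)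

theory Defs
  imports Main
begin

definition sgraph :: "'a set \<Rightarrow> 'a set set \<Rightarrow> bool" where
  "sgraph V E \<longleftrightarrow> finite V \<and> (\<forall>e\<in>E. e \<subseteq> V \<and> card e = 2)"

definition connected_on :: "'a set \<Rightarrow> 'a set set \<Rightarrow> bool" where
  "connected_on W E \<longleftrightarrow> W \<noteq> {} \<and>
     (\<forall>u\<in>W. \<forall>v\<in>W. (\<lambda>x y. x \<in> W \<and> y \<in> W \<and> {x, y} \<in> E)\<^sup>*\<^sup>* u v)"

definition k_connected :: "nat \<Rightarrow> 'a set \<Rightarrow> 'a set set \<Rightarrow> bool" where
  "k_connected k V E \<longleftrightarrow> card V > k \<and>
     (\<forall>S \<subseteq> V. card S < k \<longrightarrow> connected_on (V - S) E)"

definition colourable :: "nat \<Rightarrow> 'a set \<Rightarrow> 'a set set \<Rightarrow> bool" where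
  "colourable k V E \<longleftrightarrow> (\<exists>c :: 'a \<Rightarrow> nat. (\<forall>v\<in>V. c v < k) \<and>
     (\<forall>e\<in>E. \<forall>u v. e = {u, v} \<longrightarrow> c u \<noteq> c v))"

definition is_walk :: "'a set \<Rightarrow> 'a set set \<Rightarrow> 'a list \<Rightarrow> bool" where
  "is_walk V E xs \<longleftrightarrow> xs \<noteq> [] \<and> set xs \<subseteq> V \<and>
     (\<forall>i. Suc i < length xs \<longrightarrow> {xs ! i, xs ! Suc i} \<in> E)"

definition has_cycle :: "'a set \<Rightarrow> 'a set set \<Rightarrow> bool" where
  "has_cycle V E \<longleftrightarrow> (\<exists>xs. is_walk V E xs \<and> distinct xs \<and> length xs \<ge> 3 \<and>
     {last xs, hd xs} \<in> E)"

definition is_tree :: "'a set \<Rightarrow> 'a set set \<Rightarrow> bool" where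
  "is_tree V E \<longleftrightarrow> sgraph V E \<and> connected_on V E \<and> \<not> has_cycle V E"

definition max_degree_le :: "nat \<Rightarrow> 'a set \<Rightarrow> 'a set set \<Rightarrow> bool" where
  "max_degree_le k V E \<longleftrightarrow> (\<forall>v\<in>V. card {e\<in>E. v \<in> e} \<le> k)"

definition is_path_set :: "'a set \<Rightarrow> 'a set set \<Rightarrow> 'a set \<Rightarrow> bool" where
  "is_path_set V E P \<longleftrightarrow> (\<exists>xs. is_walk V E xs \<and> distinct xs \<and> set xs = P)"

definition overlap :: "'a set \<Rightarrow> 'a set \<Rightarrow> bool" where
  "overlap a b \<longleftrightarrow> a \<inter> b \<noteq> {} \<and> a - b \<noteq> {} \<and> b - a \<noteq> {}"

text \<open>(V,E) is the overlap (resp. intersection) graph of a family of paths in a tree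
  of maximum degree at most k. Tree nodes are taken from nat (trees are finite,
  so this is no loss of generality).\<close>
definition overlap_path_graph :: "nat \<Rightarrow> 'a set \<Rightarrow> 'a set set \<Rightarrow> bool" where
  "overlap_path_graph k V E \<longleftrightarrow> (\<exists>(T :: nat set) F P. is_tree T F \<and> max_degree_le k T F \<and>
     (\<forall>x\<in>V. is_path_set T F (P x)) \<and>
     (\<forall>x\<in>V. \<forall>y\<in>V. x \<noteq> y \<longrightarrow> ({x, y} \<in> E \<longleftrightarrow> overlap (P x) (P y))))"

definition intersection_path_graph :: "nat \<Rightarrow> 'a set \<Rightarrow> 'a set set \<Rightarrow> bool" where
  "intersection_path_graph k V E \<longleftrightarrow> (\<exists>(T :: nat set) F P. is_tree T F \<and> max_degree_le k T F \<and>
     (\<forall>x\<in>V. is_path_set T F (P x)) \<and>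
     (\<forall>x\<in>V. \<forall>y\<in>V. x \<noteq> y \<longrightarrow> ({x, y} \<in> E \<longleftrightarrow> P x \<inter> P y \<noteq> {})))"

text \<open>The empty-set-blocked graph G'': copies are indexed by i < 6.
  VRep i v: vertex v of copy i; ERep i e: edge-representative of edge e of copy i;
  Bro i v: brother of VRep i v.\<close>
datatype 'a blk = VRep nat 'a | ERep nat "'a set" | Bro nat 'a

definition blocked_V :: "'a set \<Rightarrow> 'a set set \<Rightarrow> 'a blk set" where
  "blocked_V V E = {VRep i v | i v. i < 6 \<and> v \<in> V} \<union> {ERep i e | i e. i < 6 \<and> e \<in> E}
     \<union> {Bro i v | i v. i < 6 \<and> v \<in> V}"

definition blocked_E :: "'a set \<Rightarrow> 'a set set \<Rightarrow> 'a blk set set" where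
  "blocked_E V E =
     {{VRep i v, ERep i e} | i v e. i < 6 \<and> e \<in> E \<and> v \<in> e}
   \<union> {{x, y} | x y. x \<noteq> y \<and>
        x \<in> {ERep i e | i e. i < 6 \<and> e \<in> E} \<union> {Bro i v | i v. i < 6 \<and> v \<in> V} \<and>
        y \<in> {ERep i e | i e. i < 6 \<and> e \<in> E} \<union> {Bro i v | i v. i < 6 \<and> v \<in> V}}
   \<union> {{VRep i v, Bro i v} | i v. i < 6 \<and> v \<in> V}"

end

theory Submission
  imports Defs "HOL-Library.Countable"
begin

text \<open>In the blocked graph the edge- and brother-representatives form a clique, so in
  any representation by paths of a tree their paths pairwise intersect, and by the Helly property of
  subtrees they share a node \<open>r\<close>. In some copy of \<open>G\<close> no vertex-path contains \<open>r\<close>: for intersection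
  graphs because a vertex is disjoint from the brother of a vertex in another copy, for overlap graphs
  because three vertex-paths through \<open>r\<close> in three copies would force an impossible nesting of the
  paths involved. A vertex-path avoiding \<open>r\<close> lies in a single branch at \<open>r\<close>, and the edge gadget
  (edge-representative and the two brothers, all through \<open>r\<close>) forces adjacent vertices into different
  branches; as \<open>r\<close> has at most \<open>k\<close> branches this is a \<open>k\<close>-colouring. Conversely, from a \<open>k\<close>-colouring
  one builds a spider with \<open>k\<close> long legs, one per colour: a vertex is a short pendant path at a
  position of the leg of its colour, an edge is the path between the pendants of its ends, and a
  brother runs from its vertex's pendant through the centre to the end of another leg.\<close>

section \<open>Walks\<close>

definition adj :: "'a set set \<Rightarrow> 'a \<Rightarrow> 'a \<Rightarrow> bool" where "adj F x y \<longleftrightarrow> {x,y} \<in> F"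

lemma adj_sym: "adj F x y = adj F y x" by (simp add: adj_def insert_commute)

lemma adj_flip: "(\<lambda>x y. adj F y x) = adj F" using adj_sym by fastforce

lemma is_walk_iff_successively: "is_walk V E xs \<longleftrightarrow> xs \<noteq> [] \<and> set xs \<subseteq> V \<and> successively (adj E) xs"
  unfolding is_walk_def successively_conv_nth adj_def by auto

definition simple_walk :: "'a set \<Rightarrow> 'a set set \<Rightarrow> 'a \<Rightarrow> 'a \<Rightarrow> 'a list \<Rightarrow> bool" where
 "simple_walk T F x y xs \<longleftrightarrow>
    xs \<noteq> [] \<and> set xs \<subseteq> T \<and> successively (adj F) xs \<and> distinct xs \<and> hd xs = x \<and> last xs = y"

lemma simple_walk_ends: "simple_walk T F x y xs \<Longrightarrow> x \<in> set xs \<and> y \<in> set xs \<and> set xs \<subseteq> T"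
  by (auto simp: simple_walk_def)

lemma simple_walk_path_set: "simple_walk T F x y xs \<Longrightarrow> is_path_set T F (set xs)"
  by (auto simp: is_path_set_def is_walk_iff_successively simple_walk_def)

lemma successively_adj_rev: "successively (adj F) (rev xs) \<longleftrightarrow> successively (adj F) xs"
  by (simp only: successively_rev adj_flip)

lemma simple_walk_rev: "simple_walk T F x y xs \<Longrightarrow> simple_walk T F y x (rev xs)"
  by (auto simp: simple_walk_def successively_adj_rev hd_rev last_rev simp del: successively_rev)

definition segment :: "'a list \<Rightarrow> nat \<Rightarrow> nat \<Rightarrow> 'a list" where
 "segment xs i j = map (\<lambda>t. xs ! t) (if i \<le> j then [i..<Suc j] else rev [j..<Suc i])"

lemma set_segment: "set (segment xs i j) = (\<lambda>t. xs ! t) ` {min i j..max i j}"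
  by (auto simp: segment_def atLeastLessThanSuc_atLeastAtMost simp del: upt_Suc)

lemma simple_walk_segment_ascending:
  assumes "simple_walk T F x y xs" "i \<le> j" "j < length xs"
  shows "simple_walk T F (xs ! i) (xs ! j) (map (\<lambda>t. xs ! t) [i..<Suc j])"
proof -
  have s: "successively (adj F) xs" and d: "distinct xs" using assms by (auto simp: simple_walk_def)
  have "successively (adj F) (map (\<lambda>t. xs ! t) [i..<Suc j])"
    using s assms(3) by (auto simp: successively_conv_nth simp del: upt_Suc)
  moreover have "distinct (map (\<lambda>t. xs ! t) [i..<Suc j])"
    using d assms(3) by (auto simp: distinct_map inj_on_def nth_eq_iff_index_eq)
  moreover have "set (map (\<lambda>t. xs ! t) [i..<Suc j]) \<subseteq> T" using assms(1,3) by (auto simp: simple_walk_def)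
  ultimately show ?thesis using assms(2) by (auto simp: simple_walk_def hd_map last_map simp del: upt_Suc)
qed

lemma simple_walk_segment:
  assumes "simple_walk T F x y xs" "i < length xs" "j < length xs"
  shows "simple_walk T F (xs ! i) (xs ! j) (segment xs i j)"
proof (cases "i \<le> j")
  case True
  then show ?thesis using simple_walk_segment_ascending[OF assms(1) True assms(3)]
    by (simp add: segment_def del: upt_Suc)
next
  case False
  then show ?thesis
    using simple_walk_rev[OF simple_walk_segment_ascending[OF assms(1) _ assms(2), of j]]
    by (simp add: segment_def rev_map del: upt_Suc)
qed

lemma segment_nth_1_less: "i < j \<Longrightarrow> segment xs i j ! 1 = xs ! Suc i"
  by (simp add: segment_def del: upt_Suc)

lemma segment_nth_1_greater: "j < i \<Longrightarrow> segment xs i j ! 1 = xs ! (i - 1)"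
  by (simp add: segment_def rev_nth del: upt_Suc)

lemma simple_walk_append:
  assumes "simple_walk T F x m a" "simple_walk T F m y b" "set a \<inter> set b = {m}"
  shows "simple_walk T F x y (a @ tl b)"
proof -
  obtain b' where b: "b = m # b'" using assms(2) by (cases b) (auto simp: simple_walk_def)
  show ?thesis using assms unfolding b simple_walk_def
    by (auto simp: successively_append_iff successively_Cons)
qed

lemma set_append_tl_simple_walk: "simple_walk T F m y b \<Longrightarrow> m \<in> set a \<Longrightarrow> set (a @ tl b) = set a \<union> set b"
  by (cases b) (auto simp: simple_walk_def)

lemma simple_walk_from_walk:
  "xs \<noteq> [] \<Longrightarrow> set xs \<subseteq> T \<Longrightarrow> successively (adj F) xs \<Longrightarrow>
    \<exists>ys. simple_walk T F (hd xs) (last xs) ys"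
proof (induction "length xs" arbitrary: xs rule: less_induct)
  case less
  show ?case
  proof (cases "distinct xs")
    case True thus ?thesis using less.prems by (auto simp: simple_walk_def)
  next
    case False
    then obtain a b c y where xs: "xs = a @ [y] @ b @ [y] @ c" using not_distinct_decomp by blast
    let ?ys = "a @ [y] @ c"
    have "length ?ys < length xs" using xs by simp
    moreover have "set ?ys \<subseteq> T" using less.prems xs by auto
    moreover have "successively (adj F) ?ys" using less.prems(3) unfolding xs
      by (cases c) (auto simp: successively_append_iff successively_Cons)
    moreover have "hd ?ys = hd xs" "last ?ys = last xs" using xs by (cases a; cases c; simp)+
    ultimately show ?thesis using less.hyps by (metis Nil_is_append_conv not_Cons_self2)
  qed
qed

lemma has_cycle_two_walks:
  assumes walks: "successively (adj F) (x # q @ [z])" "successively (adj F) (x # s @ [z])"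
    and sub: "set (x # q @ z # s) \<subseteq> V" and dist: "distinct (x # q @ z # s)"
    and nontriv: "q \<noteq> [] \<or> s \<noteq> []"
  shows "has_cycle V F"
  unfolding has_cycle_def
proof (intro exI conjI)
  let ?cy = "x # q @ z # rev s"
  have "successively (adj F) (s @ [z])" using walks(2) by (cases s) (auto simp: successively_Cons)
  then have returning: "successively (adj F) (z # rev s)"
    using successively_adj_rev[of F "s @ [z]"] by simp
  have "successively (adj F) (x # q) \<and> adj F (last (x # q)) z"
    using walks(1) successively_append_iff[of "adj F" "x # q" "[z]"] by simp
  then have "successively (adj F) ((x # q) @ (z # rev s))"
    using returning by (simp only: successively_append_iff) simp
  then show "is_walk V F ?cy" using sub by (simp add: is_walk_iff_successively)
  show "distinct ?cy" using dist by auto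
  show "3 \<le> length ?cy" using nontriv by (auto simp: Suc_le_eq)
  have "last ?cy = hd (s @ [z])" by (cases s) (auto simp: last_rev)
  moreover have "adj F x (hd (s @ [z]))" using walks(2) by (cases s) (auto simp: successively_Cons)
  ultimately show "{last ?cy, hd ?cy} \<in> F" by (simp add: adj_def insert_commute)
qed

section \<open>Overlapping sets\<close>

lemma overlap_commute: "overlap a b = overlap b a" by (auto simp: overlap_def)

lemma overlap_imp_Int_nonempty: "overlap A B \<Longrightarrow> A \<inter> B \<noteq> {}"
  by (auto simp: overlap_def)

lemma not_overlap_nested: "\<not> overlap A B \<Longrightarrow> A \<inter> B \<noteq> {} \<Longrightarrow> A \<subseteq> B \<or> B \<subseteq> A"
  by (auto simp: overlap_def)

lemma not_overlap_subset: "\<not> overlap Q P \<Longrightarrow> Q \<inter> P \<noteq> {} \<Longrightarrow> r \<in> Q \<Longrightarrow> r \<notin> P \<Longrightarrow> P \<subseteq> Q"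
  using not_overlap_nested by blast

lemma nested_overlap_chain_False:
  assumes "r \<in> Ab" "r \<in> Ba" "r \<in> Bc" "Aa \<subseteq> Ab" "Ab \<subseteq> Ac"
    "overlap Aa Ba" "overlap Ac Bc" "\<not> overlap Ba Ab" "\<not> overlap Bc Ab" "overlap Ba Bc"
  shows False
proof -
  have "Ba \<subseteq> Ab \<or> Ab \<subseteq> Ba" using not_overlap_nested assms by blast
  then have "Ba \<subseteq> Ab" using assms(4,6) by (auto simp: overlap_def)
  have "Bc \<subseteq> Ab \<or> Ab \<subseteq> Bc" using not_overlap_nested assms by blast
  then have "Ab \<subseteq> Bc" using assms(5,7) by (auto simp: overlap_def)
  show False using \<open>Ba \<subseteq> Ab\<close> \<open>Ab \<subseteq> Bc\<close> assms(10) by (auto simp: overlap_def)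
qed

text \<open>The sets \<open>A i\<close> through \<open>r\<close> are pairwise nested, so one of them lies between the other two,
  and the previous lemma applies.\<close>
lemma three_rooted_overlap_pairs_False:
  fixes A B :: "nat \<Rightarrow> 'x set"
  assumes h1: "\<And>i. i < 3 \<Longrightarrow> r \<in> A i \<and> r \<in> B i \<and> overlap (A i) (B i)"
    and h2: "\<And>i j. i < 3 \<Longrightarrow> j < 3 \<Longrightarrow> i \<noteq> j \<Longrightarrow>
       \<not> overlap (A i) (A j) \<and> \<not> overlap (B i) (A j) \<and> overlap (B i) (B j)"
  shows False
proof -
  have nested: "A i \<subseteq> A j \<or> A j \<subseteq> A i" if "i < 3" "j < 3" for i j
  proof (cases "i = j")
    case False
    have "r \<in> A i" "r \<in> A j" using h1 that by auto
    moreover have "\<not> overlap (A i) (A j)" using h2 that False by auto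
    ultimately show ?thesis using not_overlap_nested[of "A i" "A j"] by blast
  qed simp
  have no_chain: "False" if "a < 3" "b < 3" "c < 3" "a \<noteq> b" "b \<noteq> c" "a \<noteq> c"
    "A a \<subseteq> A b" "A b \<subseteq> A c" for a b c
  proof (rule nested_overlap_chain_False[of r "A b" "B a" "B c" "A a" "A c"])
    show "r \<in> A b" "r \<in> B a" "r \<in> B c" "overlap (A a) (B a)" "overlap (A c) (B c)"
      using h1 that by auto
    show "\<not> overlap (B a) (A b)" "\<not> overlap (B c) (A b)" "overlap (B a) (B c)"
      using h2 that by auto
  qed (use that in auto)
  show False
    using nested[of 0 1] nested[of 1 2] nested[of 0 2]
      no_chain[of 0 1 2] no_chain[of 0 2 1] no_chain[of 1 0 2] no_chain[of 1 2 0]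
      no_chain[of 2 0 1] no_chain[of 2 1 0]
    by auto
qed

section \<open>The blocked graph and its path models\<close>

definition blocked_clique :: "'a set \<Rightarrow> 'a set set \<Rightarrow> 'a blk set" where
  "blocked_clique V E = {ERep i e | i e. i < 6 \<and> e \<in> E} \<union> {Bro i v | i v. i < 6 \<and> v \<in> V}"

lemma blocked_E_vertex_edge: "i < 6 \<Longrightarrow> e \<in> E \<Longrightarrow> v \<in> e \<Longrightarrow> {VRep i v, ERep i e} \<in> blocked_E V E"
  unfolding blocked_E_def by (intro UnI1 CollectI) blast

lemma blocked_E_vertex_brother: "i < 6 \<Longrightarrow> v \<in> V \<Longrightarrow> {VRep i v, Bro i v} \<in> blocked_E V E"
  unfolding blocked_E_def by (intro UnI2 CollectI) blast

lemma blocked_E_clique: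
  "x \<in> blocked_clique V E \<Longrightarrow> y \<in> blocked_clique V E \<Longrightarrow> x \<noteq> y \<Longrightarrow> {x, y} \<in> blocked_E V E"
  unfolding blocked_E_def blocked_clique_def by (intro UnI1 UnI2 CollectI exI[of _ x] exI[of _ y]) simp

lemma blocked_E_not_vertex_vertex: "{VRep i v, VRep j w} \<notin> blocked_E V E"
  unfolding blocked_E_def by (auto simp: doubleton_eq_iff)

lemma blocked_E_not_vertex_brother: "(i, v) \<noteq> (j, w) \<Longrightarrow> {VRep i v, Bro j w} \<notin> blocked_E V E"
  unfolding blocked_E_def by (auto simp: doubleton_eq_iff)

lemma blocked_E_vertex_edgeD: "{VRep i v, ERep j e} \<in> blocked_E V E \<Longrightarrow> i = j \<and> v \<in> e"
  unfolding blocked_E_def by (auto simp: doubleton_eq_iff)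

lemma blocked_clique_subset: "blocked_clique V E \<subseteq> blocked_V V E"
  unfolding blocked_V_def blocked_clique_def by blast

lemma VRep_in_blocked_V: "i < 6 \<Longrightarrow> v \<in> V \<Longrightarrow> VRep i v \<in> blocked_V V E"
  unfolding blocked_V_def by blast

lemma blocked_V_cases:
  "x \<in> blocked_V V E \<Longrightarrow> (\<exists>i v. x = VRep i v \<and> i < 6 \<and> v \<in> V) \<or> x \<in> blocked_clique V E"
  unfolding blocked_V_def blocked_clique_def by blast

lemma finite_blocked_clique: assumes "sgraph V E" shows "finite (blocked_clique V E)"
proof -
  have fV: "finite V" using assms by (simp add: sgraph_def)
  have "E \<subseteq> Pow V" using assms by (auto simp: sgraph_def)
  then have fE: "finite E" using fV finite_subset by blast
  have "blocked_clique V E = (\<lambda>(i, e). ERep i e) ` ({..<6} \<times> E) \<union> (\<lambda>(i, v). Bro i v) ` ({..<6} \<times> V)"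
    unfolding blocked_clique_def by auto
  then show ?thesis using fV fE by simp
qed

definition path_model ::
  "('n set \<Rightarrow> 'n set \<Rightarrow> bool) \<Rightarrow> 'n set \<Rightarrow> 'n set set \<Rightarrow> 'a set \<Rightarrow> 'a set set \<Rightarrow> ('a \<Rightarrow> 'n set) \<Rightarrow> bool"
  where "path_model R T F V E P \<longleftrightarrow> (\<forall>x\<in>V. is_path_set T F (P x)) \<and>
           (\<forall>x\<in>V. \<forall>y\<in>V. x \<noteq> y \<longrightarrow> ({x, y} \<in> E \<longleftrightarrow> R (P x) (P y)))"

lemma overlap_path_graph_iff:
  "overlap_path_graph k V E \<longleftrightarrow>
     (\<exists>(T :: nat set) F P. is_tree T F \<and> max_degree_le k T F \<and> path_model overlap T F V E P)"
  by (simp add: overlap_path_graph_def path_model_def)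

lemma intersection_path_graph_iff:
  "intersection_path_graph k V E \<longleftrightarrow>
     (\<exists>(T :: nat set) F P. is_tree T F \<and> max_degree_le k T F \<and> path_model (\<lambda>A B. A \<inter> B \<noteq> {}) T F V E P)"
  by (simp add: intersection_path_graph_def path_model_def)

lemma path_model_edge_iff:
  "path_model R T F V E P \<Longrightarrow> x \<in> V \<Longrightarrow> y \<in> V \<Longrightarrow> x \<noteq> y \<Longrightarrow> {x, y} \<in> E \<longleftrightarrow> R (P x) (P y)"
  by (simp add: path_model_def)

lemma path_model_path_set: "path_model R T F V E P \<Longrightarrow> x \<in> V \<Longrightarrow> is_path_set T F (P x)"
  by (simp add: path_model_def)

section \<open>Paths in trees\<close>

locale tree =
  fixes T :: "'n set" and F :: "'n set set"
  assumes is_tree: "is_tree T F"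
begin

lemma sgraph: "sgraph T F" and connected: "connected_on T F" and acyclic: "\<not> has_cycle T F"
  using is_tree by (auto simp: is_tree_def)

lemma finite_nodes: "finite T" using sgraph by (simp add: sgraph_def)

lemma edge_subset: "e \<in> F \<Longrightarrow> e \<subseteq> T" and edge_card: "e \<in> F \<Longrightarrow> card e = 2"
  using sgraph by (auto simp: sgraph_def)

lemma finite_edges: "finite F"
  using finite_nodes edge_subset by (meson Pow_iff finite_Pow_iff finite_subset subsetI)

lemma adj_nodes: "adj F x y \<Longrightarrow> x \<in> T \<and> y \<in> T"
  using edge_subset by (auto simp: adj_def)

lemma adj_neq: "adj F x y \<Longrightarrow> x \<noteq> y"
  using edge_card by (fastforce simp: adj_def)

lemma simple_walk_exists: assumes "x \<in> T" "y \<in> T" shows "\<exists>xs. simple_walk T F x y xs"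
proof -
  have "(\<lambda>a b. a \<in> T \<and> b \<in> T \<and> {a, b} \<in> F)\<^sup>*\<^sup>* x y"
    using connected assms by (auto simp: connected_on_def)
  then have "\<exists>xs. xs \<noteq> [] \<and> set xs \<subseteq> T \<and> successively (adj F) xs \<and> hd xs = x \<and> last xs = y"
  proof (induction rule: rtranclp_induct)
    case base thus ?case using assms by (intro exI[of _ "[x]"]) auto
  next
    case (step b c)
    then obtain xs where "xs \<noteq> [] \<and> set xs \<subseteq> T \<and> successively (adj F) xs \<and> hd xs = x \<and> last xs = b"
      by blast
    then show ?case using step(2)
      by (intro exI[of _ "xs @ [c]"]) (auto simp: successively_append_iff adj_def)
  qed
  then show ?thesis using simple_walk_from_walk by metis
qed

lemma simple_walk_unique: "simple_walk T F x y xs \<Longrightarrow> simple_walk T F x y ys \<Longrightarrow> xs = ys"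
proof (induction xs arbitrary: x ys)
  case Nil thus ?case by (simp add: simple_walk_def)
next
  case (Cons a xs')
  hence ax: "a = x" by (simp add: simple_walk_def)
  obtain ys' where ys: "ys = x # ys'" using Cons.prems(2) by (cases ys) (auto simp: simple_walk_def)
  have dx: "distinct (x # xs')" "distinct (x # ys')" using Cons.prems ax ys by (auto simp: simple_walk_def)
  have sx: "successively (adj F) (x # xs')" "successively (adj F) (x # ys')"
    using Cons.prems ax ys by (auto simp: simple_walk_def)
  have Tx: "set (x # xs') \<subseteq> T" "set (x # ys') \<subseteq> T" using Cons.prems ax ys by (auto simp: simple_walk_def)
  have "xs' = [] \<longleftrightarrow> y = x" "ys' = [] \<longleftrightarrow> y = x"
    using Cons.prems ax ys dx last_in_set[of xs'] last_in_set[of ys']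
    by (auto simp: simple_walk_def split: if_splits)
  then consider "xs' = []" "ys' = []" | "xs' \<noteq> []" "ys' \<noteq> []" by blast
  then show ?case
  proof cases
    case 1 then show ?thesis using ax ys by simp
  next
    case 2
    have ly: "last xs' = y" "last ys' = y" using Cons.prems ax ys 2 by (auto simp: simple_walk_def)
    show ?thesis
    proof (cases "hd ys' = hd xs'")
      case True
      have "simple_walk T F (hd xs') y xs'" "simple_walk T F (hd xs') y ys'"
        using Cons.prems ax ys ly 2 True by (auto simp: simple_walk_def successively_Cons)
      then show ?thesis using Cons.IH ax ys by metis
    next
      case False
      \<comment> \<open>the first node \<open>z\<close> of \<open>xs'\<close> on \<open>ys'\<close> closes a cycle through \<open>x\<close>\<close>
      have "y \<in> set xs'" "y \<in> set ys'" using ly 2 last_in_set by metis+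
      then obtain q z w where xs': "xs' = q @ z # w" and zin: "z \<in> set ys'"
        and qn: "\<forall>u\<in>set q. u \<notin> set ys'"
        using split_list_first_prop[of xs' "\<lambda>u. u \<in> set ys'"] by blast
      obtain s t where ys': "ys' = s @ z # t" using zin split_list by metis
      have "has_cycle T F"
      proof (rule has_cycle_two_walks)
        show "successively (adj F) (x # q @ [z])" "successively (adj F) (x # s @ [z])"
          using sx unfolding xs' ys' by (auto simp: successively_append_iff successively_Cons hd_append)
        show "set (x # q @ z # s) \<subseteq> T" "distinct (x # q @ z # s)"
          using Tx dx qn unfolding xs' ys' by auto
        show "q \<noteq> [] \<or> s \<noteq> []" using False xs' ys' by auto
      qed
      with acyclic show ?thesis by blast
    qed
  qed
qed

definition tpath :: "'n \<Rightarrow> 'n \<Rightarrow> 'n list" where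
  "tpath x y = (THE xs. simple_walk T F x y xs)"

lemma tpath_eqI: "simple_walk T F x y xs \<Longrightarrow> tpath x y = xs"
  unfolding tpath_def using simple_walk_unique by blast

lemma simple_walk_tpath: "x \<in> T \<Longrightarrow> y \<in> T \<Longrightarrow> simple_walk T F x y (tpath x y)"
  using simple_walk_exists tpath_eqI by metis

lemma tpath_segment:
  "simple_walk T F x y xs \<Longrightarrow> i < length xs \<Longrightarrow> j < length xs \<Longrightarrow> tpath (xs!i) (xs!j) = segment xs i j"
  using simple_walk_segment tpath_eqI by metis

lemma tpath_subset_simple_walk: assumes "simple_walk T F a b xs" "x \<in> set xs" "y \<in> set xs" shows "set (tpath x y) \<subseteq> set xs"
proof -
  obtain i j where "i < length xs" "j < length xs" "xs ! i = x" "xs ! j = y"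
    using assms by (metis in_set_conv_nth)
  then show ?thesis using tpath_segment[OF assms(1)] set_segment[of xs i j]
    by (auto simp: min_def max_def split: if_splits)
qed

lemma path_set_simple_walk: "is_path_set T F P \<Longrightarrow> \<exists>xs. simple_walk T F (hd xs) (last xs) xs \<and> set xs = P"
  by (auto simp: is_path_set_def is_walk_iff_successively simple_walk_def)

lemma path_set_subset_nonempty: "is_path_set T F P \<Longrightarrow> P \<subseteq> T \<and> P \<noteq> {}"
  by (auto simp: is_path_set_def is_walk_def)

lemma tpath_subset_path_set: "is_path_set T F P \<Longrightarrow> x \<in> P \<Longrightarrow> y \<in> P \<Longrightarrow> set (tpath x y) \<subseteq> P"
  using path_set_simple_walk tpath_subset_simple_walk by metis

lemma tpath_junction:
  assumes "simple_walk T F m x a" "simple_walk T F m y b" "set a \<inter> set b = {m}"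
  shows "tpath x y = rev a @ tl b"
  using simple_walk_append[OF simple_walk_rev[OF assms(1)] assms(2)] assms(3) by (simp add: tpath_eqI)

text \<open>The median of \<open>a, b, c\<close>: the last node of the path from \<open>a\<close> to \<open>b\<close> that still lies on the path from
  \<open>a\<close> to \<open>c\<close>; beyond it the two paths continue disjointly.\<close>
lemma tpaths_meet:
  assumes "a \<in> T" "b \<in> T" "c \<in> T"
  shows "\<exists>m. m \<in> set (tpath a b) \<and> m \<in> set (tpath b c) \<and> m \<in> set (tpath a c)"
proof -
  define L where "L = tpath a b"
  define M where "M = tpath a c"
  have dL: "simple_walk T F a b L" and dM: "simple_walk T F a c M"
    using simple_walk_tpath assms L_def M_def by auto
  define S where "S = {t. t < length L \<and> L ! t \<in> set M}"
  have "L ! 0 = a" "M ! 0 = a" "M \<noteq> []" "L \<noteq> []" using dL dM by (auto simp: simple_walk_def hd_conv_nth)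
  then have "0 \<in> S" unfolding S_def using nth_mem[of 0 M] by auto
  have finS: "finite S" by (simp add: S_def)
  define i where "i = Max S"
  have iS: "i \<in> S" using Max_in[OF finS] \<open>0 \<in> S\<close> by (auto simp: i_def)
  have imax: "\<And>t. t \<in> S \<Longrightarrow> t \<le> i" using finS by (simp add: i_def)
  define m where "m = L ! i"
  obtain j where j: "j < length M" "M ! j = m" using iS by (auto simp: S_def m_def in_set_conv_nth)
  have il: "i < length L" using iS by (simp add: S_def)
  have lL: "L ! (length L - 1) = b" and lM: "M ! (length M - 1) = c"
    using dL dM by (auto simp: simple_walk_def last_conv_nth)
  define s1 where "s1 = segment L i (length L - 1)"
  define s2 where "s2 = segment M j (length M - 1)"
  have d1: "simple_walk T F m b s1"
    using simple_walk_segment[OF dL il, of "length L - 1"] il lL by (simp add: s1_def m_def)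
  have d2: "simple_walk T F m c s2"
    using simple_walk_segment[OF dM j(1), of "length M - 1"] j lM by (simp add: s2_def)
  have "set s1 \<inter> set s2 \<subseteq> {m}"
  proof
    fix u assume u: "u \<in> set s1 \<inter> set s2"
    then obtain t where t: "i \<le> t" "t \<le> length L - 1" "u = L ! t"
      using il by (auto simp: s1_def set_segment min_def max_def split: if_splits)
    have "set s2 \<subseteq> set M" using j(1) by (auto simp: s2_def set_segment)
    then have "t \<in> S" using u t il by (auto simp: S_def)
    then show "u \<in> {m}" using imax t by (fastforce simp: m_def)
  qed
  then have "set s1 \<inter> set s2 = {m}" using simple_walk_ends[OF d1] simple_walk_ends[OF d2] by auto
  then have "m \<in> set (tpath b c)" using tpath_junction[OF d1 d2] simple_walk_ends[OF d1] by simp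
  moreover have "m \<in> set L" using il m_def by simp
  moreover have "m \<in> set M" using j nth_mem by blast
  ultimately show ?thesis using L_def M_def by blast
qed

lemma path_sets_Helly3:
  assumes "is_path_set T F A" "is_path_set T F B" "is_path_set T F C"
    "A \<inter> B \<noteq> {}" "A \<inter> C \<noteq> {}" "B \<inter> C \<noteq> {}"
  shows "A \<inter> B \<inter> C \<noteq> {}"
proof -
  obtain p where p: "p \<in> B" "p \<in> C" using assms by blast
  obtain q where q: "q \<in> A" "q \<in> C" using assms by blast
  obtain s where s: "s \<in> A" "s \<in> B" using assms by blast
  have T: "p \<in> T" "q \<in> T" "s \<in> T" using p q s path_set_subset_nonempty assms by blast+
  obtain m where "m \<in> set (tpath p q)" "m \<in> set (tpath q s)" "m \<in> set (tpath p s)"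
    using tpaths_meet[OF T] by blast
  moreover have "set (tpath p q) \<subseteq> C" "set (tpath q s) \<subseteq> A" "set (tpath p s) \<subseteq> B"
    using tpath_subset_path_set assms p q s by blast+
  ultimately show ?thesis by blast
qed

lemma path_set_Int:
  assumes "is_path_set T F A" "is_path_set T F B" "A \<inter> B \<noteq> {}"
  shows "is_path_set T F (A \<inter> B)"
proof -
  obtain xs where d: "simple_walk T F (hd xs) (last xs) xs" and A: "set xs = A" using path_set_simple_walk assms(1) by blast
  define S where "S = {t. t < length xs \<and> xs ! t \<in> B}"
  have finS: "finite S" and neS: "S \<noteq> {}" using assms(3) A
    by (auto simp: S_def in_set_conv_nth)
  define i where "i = Min S"
  define j where "j = Max S"
  have iS: "i \<in> S" and jS: "j \<in> S" using finS neS by (auto simp: i_def j_def)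
  have ij: "\<And>t. t \<in> S \<Longrightarrow> i \<le> t \<and> t \<le> j" using finS by (auto simp: i_def j_def)
  have il: "i < length xs" and jl: "j < length xs" using iS jS by (auto simp: S_def)
  have "i \<le> j" using ij iS by blast
  have sd: "simple_walk T F (xs!i) (xs!j) (segment xs i j)" using simple_walk_segment[OF d il jl] .
  have "set (segment xs i j) = A \<inter> B"
  proof
    have "set (segment xs i j) \<subseteq> B"
      using tpath_subset_path_set[OF assms(2), of "xs!i" "xs!j"] iS jS tpath_segment[OF d il jl] by (auto simp: S_def)
    moreover have "set (segment xs i j) \<subseteq> A" using A jl \<open>i \<le> j\<close>
      by (auto simp: set_segment)
    ultimately show "set (segment xs i j) \<subseteq> A \<inter> B" by blast
    show "A \<inter> B \<subseteq> set (segment xs i j)"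
    proof
      fix u assume "u \<in> A \<inter> B"
      then obtain t where "t < length xs" "xs ! t = u" "u \<in> B" using A by (auto simp: in_set_conv_nth)
      then have "t \<in> S" by (auto simp: S_def)
      then show "u \<in> set (segment xs i j)" using ij \<open>xs ! t = u\<close> \<open>i \<le> j\<close> by (auto simp: set_segment)
    qed
  qed
  then show ?thesis using simple_walk_path_set[OF sd] by simp
qed

lemma path_sets_Helly:
  "finite \<A> \<Longrightarrow> \<A> \<noteq> {} \<Longrightarrow> \<forall>A\<in>\<A>. is_path_set T F A \<Longrightarrow> \<forall>A\<in>\<A>. \<forall>B\<in>\<A>. A \<inter> B \<noteq> {}
   \<Longrightarrow> \<exists>r. \<forall>A\<in>\<A>. r \<in> A"
proof (induction "card \<A>" arbitrary: \<A> rule: less_induct)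
  case less
  show ?case
  proof (cases "\<exists>A B. A \<in> \<A> \<and> B \<in> \<A> \<and> A \<noteq> B")
    case False
    then obtain A where "\<A> = {A}" using less.prems(2) by blast
    then show ?thesis using less.prems(4) by auto
  next
    case True
    then obtain A B where AB: "A \<in> \<A>" "B \<in> \<A>" "A \<noteq> B" by blast
    define \<A>' where "\<A>' = insert (A \<inter> B) (\<A> - {A, B})"
    have "card (\<A> - {A, B}) = card \<A> - 2" using AB less.prems(1) by (simp add: card_Diff_subset)
    moreover have "card {A,B} \<le> card \<A>" using AB less.prems(1) by (intro card_mono) auto
    then have "card \<A> \<ge> 2" using AB by simp
    moreover have "card \<A>' \<le> Suc (card (\<A> - {A, B}))" unfolding \<A>'_def using less.prems(1)
      by (simp add: card_insert_if)
    ultimately have c1: "card \<A>' < card \<A>" by linarith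
    have c2: "finite \<A>'" "\<A>' \<noteq> {}" using less.prems(1) by (auto simp: \<A>'_def)
    have c3: "\<forall>C\<in>\<A>'. is_path_set T F C"
      using less.prems path_set_Int AB by (auto simp: \<A>'_def)
    have meets_AB: "A \<inter> B \<inter> C \<noteq> {}" if "C \<in> \<A>" for C
      by (rule path_sets_Helly3) (use less.prems(3,4) AB that in auto)
    have c4: "\<forall>C\<in>\<A>'. \<forall>D\<in>\<A>'. C \<inter> D \<noteq> {}"
      using meets_AB AB less.prems(4) unfolding \<A>'_def by (auto simp: Int_ac)
    obtain r where "\<forall>C\<in>\<A>'. r \<in> C" using less.hyps[OF c1 c2 c3 c4] by blast
    then show ?thesis by (auto simp: \<A>'_def)
  qed
qed

definition branch :: "'n \<Rightarrow> 'n \<Rightarrow> 'n" where "branch r x = tpath r x ! 1"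

lemma simple_walk_length_ge2: "simple_walk T F r x L \<Longrightarrow> x \<noteq> r \<Longrightarrow> 2 \<le> length L"
proof (rule ccontr)
  assume "simple_walk T F r x L" "x \<noteq> r" "\<not> 2 \<le> length L"
  then have "length L = 1" by (cases L) (auto simp: simple_walk_def Suc_le_eq)
  then show False using \<open>simple_walk T F r x L\<close> \<open>x \<noteq> r\<close> by (cases L) (auto simp: simple_walk_def)
qed

lemma simple_walk_nth_0: "simple_walk T F r x L \<Longrightarrow> L ! 0 = r"
  by (auto simp: simple_walk_def hd_conv_nth)

lemma simple_walk_nth_last: "simple_walk T F r x L \<Longrightarrow> L ! (length L - 1) = x"
  by (auto simp: simple_walk_def last_conv_nth)

lemma adj_branch: assumes "r \<in> T" "x \<in> T" "x \<noteq> r" shows "adj F r (branch r x)"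
proof -
  have d: "simple_walk T F r x (tpath r x)" using simple_walk_tpath assms by blast
  have "2 \<le> length (tpath r x)" using simple_walk_length_ge2[OF d assms(3)] .
  then have "adj F (tpath r x ! 0) (tpath r x ! Suc 0)"
    using successively_nth[of "adj F" "tpath r x" 0] d by (auto simp: simple_walk_def)
  then show ?thesis using simple_walk_nth_0[OF d] by (simp add: branch_def)
qed

lemma tpath_prefix: "simple_walk T F r x L \<Longrightarrow> j < length L \<Longrightarrow> tpath r (L ! j) = segment L 0 j"
  using tpath_segment[of r x L 0 j] simple_walk_nth_0 by (metis simple_walk_def length_greater_0_conv)

lemma branch_prefix: "simple_walk T F r x L \<Longrightarrow> 0 < j \<Longrightarrow> j < length L \<Longrightarrow> branch r (L ! j) = L ! 1"
  using tpath_prefix segment_nth_1_less by (simp add: branch_def)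

lemma branch_tpath: assumes "r \<in> T" "y \<in> T" "z \<in> set (tpath r y)" "z \<noteq> r" shows "branch r z = branch r y"
proof -
  have d: "simple_walk T F r y (tpath r y)" using simple_walk_tpath assms by blast
  obtain j where j: "j < length (tpath r y)" "tpath r y ! j = z" using assms(3) by (auto simp: in_set_conv_nth)
  have "0 < j" using j assms(4) simple_walk_nth_0[OF d] by (cases j) auto
  then show ?thesis using branch_prefix[OF d \<open>0 < j\<close> j(1)] j(2) by (simp add: branch_def)
qed

lemma branch_eq_on_path_set:
  assumes r: "r \<in> T" and P: "is_path_set T F P" and rP: "r \<notin> P" and x: "x \<in> P" and y: "y \<in> P"
  shows "branch r x = branch r y"
proof (rule ccontr)
  assume ne: "branch r x \<noteq> branch r y"
  have xT: "x \<in> T" and yT: "y \<in> T" using path_set_subset_nonempty P x y by auto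
  define a where "a = tpath r x"
  define b where "b = tpath r y"
  have da: "simple_walk T F r x a" and db: "simple_walk T F r y b" using simple_walk_tpath r xT yT a_def b_def by auto
  have "set a \<inter> set b \<subseteq> {r}"
  proof
    fix u assume u: "u \<in> set a \<inter> set b"
    show "u \<in> {r}"
    proof (rule ccontr)
      assume "u \<notin> {r}"
      then have "branch r u = branch r x" "branch r u = branch r y"
        using branch_tpath[OF r xT, of u] branch_tpath[OF r yT, of u] u a_def b_def by blast+
      then show False using ne by simp
    qed
  qed
  then have "set a \<inter> set b = {r}" using simple_walk_ends[OF da] simple_walk_ends[OF db] by auto
  then have "r \<in> set (tpath x y)" using tpath_junction[OF da db] simple_walk_ends[OF da] by simp
  then show False using tpath_subset_path_set[OF P x y] rP by blast
qed

lemma same_branch_tpath: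
  assumes Q: "is_path_set T F Q" and rQ: "r \<in> Q" and xQ: "x \<in> Q" and yQ: "y \<in> Q"
    and xr: "x \<noteq> r" and yr: "y \<noteq> r" and b: "branch r x = branch r y"
  shows "x \<in> set (tpath r y) \<or> y \<in> set (tpath r x)"
proof -
  obtain xs where d: "simple_walk T F (hd xs) (last xs) xs" and Qs: "set xs = Q"
    using path_set_simple_walk Q by blast
  obtain ir ix iy where i: "ir < length xs" "xs ! ir = r" "ix < length xs" "xs ! ix = x"
    "iy < length xs" "xs ! iy = y"
    using rQ xQ yQ Qs by (metis in_set_conv_nth)
  have py: "tpath r y = segment xs ir iy" and px: "tpath r x = segment xs ir ix"
    using tpath_segment[OF d] i by metis+
  have sides: "xs ! (ir - 1) \<noteq> xs ! Suc ir" if "0 < ir" "Suc ir < length xs"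
    using d that by (auto simp: simple_walk_def nth_eq_iff_index_eq)
  have x_on: "x \<in> set (tpath r y)" if "min ir iy \<le> ix" "ix \<le> max ir iy"
    using that i unfolding py set_segment by force
  have y_on: "y \<in> set (tpath r x)" if "min ir ix \<le> iy" "iy \<le> max ir ix"
    using that i unfolding px set_segment by force
  have "ix \<noteq> ir" "iy \<noteq> ir" using i xr yr by auto
  then consider "ir < ix" "ir < iy" | "ix < ir" "iy < ir" | "ix < ir" "ir < iy" | "iy < ir" "ir < ix"
    by linarith
  then show ?thesis
  proof cases
    case 1
    then show ?thesis using x_on y_on by (cases "ix \<le> iy") (auto simp: min_def max_def)
  next
    case 2
    then show ?thesis using x_on y_on by (cases "ix \<le> iy") (auto simp: min_def max_def)
  next
    case 3
    then have "branch r x = xs ! (ir - 1)" "branch r y = xs ! Suc ir"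
      using px py segment_nth_1_greater segment_nth_1_less by (auto simp: branch_def)
    then show ?thesis using b sides 3 i by auto
  next
    case 4
    then have "branch r y = xs ! (ir - 1)" "branch r x = xs ! Suc ir"
      using px py segment_nth_1_greater segment_nth_1_less by (auto simp: branch_def)
    then show ?thesis using b sides 4 i by auto
  qed
qed

lemma tpath_suffix_mem:
  assumes "r \<in> T" "x \<in> T" "z \<in> set (tpath r y)" "y \<in> set (tpath r x)"
  shows "y \<in> set (tpath z x)"
proof -
  define L where "L = tpath r x"
  have d: "simple_walk T F r x L" using simple_walk_tpath assms L_def by auto
  obtain j where j: "j < length L" "L ! j = y" using assms(4) L_def by (auto simp: in_set_conv_nth)
  have "tpath r y = segment L 0 j" using tpath_prefix[OF d j(1)] j by simp
  then obtain i where i: "i \<le> j" "L ! i = z" using assms(3) by (auto simp: set_segment)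
  have "tpath z x = segment L i (length L - 1)"
    using tpath_segment[OF d, of i "length L - 1"] i j simple_walk_nth_last[OF d] by auto
  then show ?thesis using i j by (auto simp: set_segment)
qed

section \<open>Colourings from path models\<close>

text \<open>The edge gadget of an edge \<open>uv\<close> of a copy of \<open>G\<close>, seen from a node \<open>r\<close> of the tree: \<open>Pu, Pv\<close> are
  the vertex-paths, \<open>Qe\<close> the edge-path and \<open>Qu, Qv\<close> the brother-paths.\<close>
definition edge_gadget_separates :: "('n set \<Rightarrow> 'n set \<Rightarrow> bool) \<Rightarrow> 'n \<Rightarrow> bool" where
  "edge_gadget_separates R r \<longleftrightarrow>
     (\<forall>Pu Pv Qe Qu Qv a b. (\<forall>P\<in>{Pu, Pv, Qe, Qu, Qv}. is_path_set T F P) \<and>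
        r \<notin> Pu \<and> r \<notin> Pv \<and> r \<in> Qe \<and> r \<in> Qu \<and> r \<in> Qv \<and>
        R Qe Pu \<and> R Qe Pv \<and> R Qu Pu \<and> R Qv Pv \<and> \<not> R Pu Pv \<and> \<not> R Qv Pu \<and> \<not> R Qu Pv \<and>
        a \<in> Pu \<and> b \<in> Pv \<longrightarrow> branch r a \<noteq> branch r b)"

lemma edge_gadget_same_branch:
  assumes r: "r \<in> T" and ps: "is_path_set T F Pu" "is_path_set T F Pv" "is_path_set T F Qe"
    "is_path_set T F Qu" "is_path_set T F Qv"
    and rn: "r \<notin> Pu" "r \<notin> Pv" and ri: "r \<in> Qe" "r \<in> Qu" "r \<in> Qv"
    and meet: "Qe \<inter> Pu \<noteq> {}" "Qe \<inter> Pv \<noteq> {}" "Qu \<inter> Pu \<noteq> {}" "Qv \<inter> Pv \<noteq> {}"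
    and ab: "a \<in> Pu" "b \<in> Pv" "branch r a = branch r b"
  obtains y z where "y \<in> Qe" "y \<in> Pv" "y \<in> Qv" "z \<in> Qe" "z \<in> Pu" "z \<in> Qu"
    "z \<in> set (tpath r y) \<or> y \<in> set (tpath r z)"
proof -
  have "Qe \<inter> Pv \<inter> Qv \<noteq> {}" using path_sets_Helly3[OF ps(3) ps(2) ps(5)] meet(2,4) ri(1,3) by auto
  then obtain y where y: "y \<in> Qe" "y \<in> Pv" "y \<in> Qv" by blast
  have "Qe \<inter> Pu \<inter> Qu \<noteq> {}" using path_sets_Helly3[OF ps(3) ps(1) ps(4)] meet(1,3) ri(1,2) by auto
  then obtain z where z: "z \<in> Qe" "z \<in> Pu" "z \<in> Qu" by blast
  have "branch r z = branch r a" using branch_eq_on_path_set[OF r ps(1) rn(1) z(2) ab(1)] .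
  also have "\<dots> = branch r b" by (rule ab(3))
  also have "\<dots> = branch r y" using branch_eq_on_path_set[OF r ps(2) rn(2) ab(2) y(2)] .
  finally have "z \<in> set (tpath r y) \<or> y \<in> set (tpath r z)"
    using same_branch_tpath[OF ps(3) ri(1) z(1) y(1)] y z rn by blast
  then show thesis using that y z by blast
qed

lemma edge_gadget_separates_intersection:
  assumes r: "r \<in> T" shows "edge_gadget_separates (\<lambda>A B. A \<inter> B \<noteq> {}) r"
  unfolding edge_gadget_separates_def
proof (intro allI impI notI, elim conjE)
  fix Pu Pv Qe Qu Qv a b
  assume ps: "\<forall>P\<in>{Pu, Pv, Qe, Qu, Qv}. is_path_set T F P"
    and rn: "r \<notin> Pu" "r \<notin> Pv" and ri: "r \<in> Qe" "r \<in> Qu" "r \<in> Qv"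
    and meet: "Qe \<inter> Pu \<noteq> {}" "Qe \<inter> Pv \<noteq> {}" "Qu \<inter> Pu \<noteq> {}" "Qv \<inter> Pv \<noteq> {}"
    and disj: "\<not> Qv \<inter> Pu \<noteq> {}" "\<not> Qu \<inter> Pv \<noteq> {}"
    and ab: "a \<in> Pu" "b \<in> Pv" "branch r a = branch r b"
  obtain y z where y: "y \<in> Qe" "y \<in> Pv" "y \<in> Qv" and z: "z \<in> Qe" "z \<in> Pu" "z \<in> Qu"
    and yz: "z \<in> set (tpath r y) \<or> y \<in> set (tpath r z)"
    using edge_gadget_same_branch[OF r _ _ _ _ _ rn ri meet ab] ps by auto
  show False
    using yz tpath_subset_path_set[of Qv r y] tpath_subset_path_set[of Qu r z] ps ri y z disj by auto
qed

text \<open>One of the two symmetric cases below: a node of \<open>Pu\<close> on the path from \<open>r\<close> to a common node \<open>y\<close> of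
  \<open>Qe, Pv, Qv\<close> makes \<open>Pu\<close> and \<open>Pv\<close> nested, which is incompatible with the brother-paths.\<close>
lemma overlap_gadget_half_False:
  assumes r: "r \<in> T" and ps: "is_path_set T F Pu" "is_path_set T F Pv" "is_path_set T F Qe"
    "is_path_set T F Qu" "is_path_set T F Qv"
    and rn: "r \<notin> Pu" "r \<notin> Pv" and ri: "r \<in> Qe" "r \<in> Qu" "r \<in> Qv"
    and ov: "overlap Qe Pu" "overlap Qu Pu" "overlap Qv Pv"
    and nov: "\<not> overlap Pu Pv" "\<not> overlap Qv Pu" "\<not> overlap Qu Pv"
    and y: "y \<in> Qe" "y \<in> Pv" "y \<in> Qv" and z: "z \<in> Pu"
    and zy: "z \<in> set (tpath r y)"
  shows False
proof -
  have yT: "y \<in> T" using path_set_subset_nonempty ps(2) y by blast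
  have "set (tpath r y) \<subseteq> Qv" using tpath_subset_path_set[OF ps(5) ri(3) y(3)] .
  then have "Qv \<inter> Pu \<noteq> {}" using zy z by blast
  then have PuQv: "Pu \<subseteq> Qv" using not_overlap_subset[OF nov(2) _ ri(3) rn(1)] by blast
  obtain x where x: "x \<in> Pu" "x \<notin> Qe" using ov(1) by (auto simp: overlap_def)
  have xr: "x \<noteq> r" "y \<noteq> r" "z \<noteq> r" using x z rn y by auto
  have xT: "x \<in> T" using path_set_subset_nonempty ps(1) x by blast
  have "branch r x = branch r z" using branch_eq_on_path_set[OF r ps(1) rn(1) x(1) z] .
  also have "\<dots> = branch r y" using branch_tpath[OF r yT zy xr(3)] .
  finally have "x \<in> set (tpath r y) \<or> y \<in> set (tpath r x)"
    using same_branch_tpath[OF ps(5) ri(3) _ y(3) xr(1,2)] PuQv x by blast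
  moreover have "set (tpath r y) \<subseteq> Qe" using tpath_subset_path_set[OF ps(3) ri(1) y(1)] .
  ultimately have "y \<in> set (tpath r x)" using x by blast
  then have "y \<in> set (tpath z x)" by (rule tpath_suffix_mem[OF r xT zy])
  then have "y \<in> Pu" using tpath_subset_path_set[OF ps(1) z x(1)] by blast
  then have "Pu \<subseteq> Pv \<or> Pv \<subseteq> Pu" using not_overlap_nested[OF nov(1)] y by blast
  then show False
  proof
    assume "Pv \<subseteq> Pu"
    then show False using PuQv ov(3) by (auto simp: overlap_def)
  next
    assume PuPv: "Pu \<subseteq> Pv"
    have "Qu \<inter> Pv \<noteq> {}" using ov(2) PuPv by (auto simp: overlap_def)
    then have "Pv \<subseteq> Qu" using not_overlap_subset[OF nov(3) _ ri(2) rn(2)] by blast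
    then show False using PuPv ov(2) by (auto simp: overlap_def)
  qed
qed

lemma edge_gadget_separates_overlap:
  assumes r: "r \<in> T" shows "edge_gadget_separates overlap r"
  unfolding edge_gadget_separates_def
proof (intro allI impI notI, elim conjE)
  fix Pu Pv Qe Qu Qv a b
  assume ps: "\<forall>P\<in>{Pu, Pv, Qe, Qu, Qv}. is_path_set T F P"
    and rn: "r \<notin> Pu" "r \<notin> Pv" and ri: "r \<in> Qe" "r \<in> Qu" "r \<in> Qv"
    and ov: "overlap Qe Pu" "overlap Qe Pv" "overlap Qu Pu" "overlap Qv Pv"
    and nov: "\<not> overlap Pu Pv" "\<not> overlap Qv Pu" "\<not> overlap Qu Pv"
    and ab: "a \<in> Pu" "b \<in> Pv" "branch r a = branch r b"
  have ps': "is_path_set T F Pu" "is_path_set T F Pv" "is_path_set T F Qe"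
    "is_path_set T F Qu" "is_path_set T F Qv" using ps by auto
  have meet: "Qe \<inter> Pu \<noteq> {}" "Qe \<inter> Pv \<noteq> {}" "Qu \<inter> Pu \<noteq> {}" "Qv \<inter> Pv \<noteq> {}"
    using ov by (auto simp: overlap_def)
  obtain y z where y: "y \<in> Qe" "y \<in> Pv" "y \<in> Qv" and z: "z \<in> Qe" "z \<in> Pu" "z \<in> Qu"
    and yz: "z \<in> set (tpath r y) \<or> y \<in> set (tpath r z)"
    using edge_gadget_same_branch[OF r ps' rn ri meet ab] by blast
  show False
    using yz overlap_gadget_half_False[OF r ps' rn ri ov(1,3,4) nov y z(2)]
      overlap_gadget_half_False[OF r ps'(2,1,3,5,4) rn(2,1) ri(1,3,2) ov(2,4,3) _ nov(3,2) z y(2)]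
      nov(1) overlap_commute by blast
qed

lemma colourable_if_branches_separate:
  fixes V :: "'a set" and E :: "'a set set" and Pv :: "'a \<Rightarrow> 'n set"
  assumes r: "r \<in> T" and deg: "max_degree_le k T F" and G: "sgraph V E"
    and P: "\<And>v. v \<in> V \<Longrightarrow> is_path_set T F (Pv v) \<and> r \<notin> Pv v"
    and sep: "\<And>u v a b. {u, v} \<in> E \<Longrightarrow> u \<in> V \<Longrightarrow> v \<in> V \<Longrightarrow> u \<noteq> v \<Longrightarrow> a \<in> Pv u \<Longrightarrow> b \<in> Pv v
       \<Longrightarrow> branch r a \<noteq> branch r b"
  shows "colourable k V E"
proof -
  define N where "N = {s. adj F r s}"
  have finN: "finite N" using adj_nodes finite_nodes by (auto simp: N_def intro: finite_subset)
  have "card N \<le> card {e \<in> F. r \<in> e}"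
  proof (rule card_inj_on_le)
    show "inj_on (\<lambda>s. {r, s}) N"
      using adj_neq by (auto simp: inj_on_def N_def doubleton_eq_iff)
    show "(\<lambda>s. {r, s}) ` N \<subseteq> {e \<in> F. r \<in> e}" by (auto simp: N_def adj_def)
    show "finite {e \<in> F. r \<in> e}" using finite_edges by simp
  qed
  also have "\<dots> \<le> k" using deg r by (auto simp: max_degree_le_def)
  finally have cN: "card N \<le> k" .
  obtain h where h: "bij_betw h N {0..<card N}" using ex_bij_betw_finite_nat[OF finN] by blast
  define pick where "pick v = (SOME y. y \<in> Pv v)" for v
  have pick: "pick v \<in> Pv v" if "v \<in> V" for v
    using P[OF that] path_set_subset_nonempty unfolding pick_def by (metis equals0I someI_ex)
  have brN: "branch r (pick v) \<in> N" if "v \<in> V" for v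
  proof -
    have "pick v \<in> T" "pick v \<noteq> r" using pick[OF that] P[OF that] path_set_subset_nonempty by auto
    then show ?thesis using adj_branch[OF r] by (auto simp: N_def)
  qed
  show ?thesis unfolding colourable_def
  proof (intro exI conjI ballI allI impI)
    fix v assume "v \<in> V"
    then have "h (branch r (pick v)) < card N" using brN h by (auto simp: bij_betw_def)
    then show "h (branch r (pick v)) < k" using cN by simp
  next
    fix e u v assume e: "e \<in> E" "e = {u, v}"
    have uv: "u \<in> V" "v \<in> V" "u \<noteq> v" using G e by (auto simp: sgraph_def)
    then have "branch r (pick u) \<noteq> branch r (pick v)" using sep e pick by blast
    then show "h (branch r (pick u)) \<noteq> h (branch r (pick v))"
      using h brN uv by (auto simp: bij_betw_def inj_on_def)
  qed
qed

lemma blocked_clique_common_node: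
  assumes G: "sgraph V E" and V: "V \<noteq> {}"
    and model: "path_model R T F (blocked_V V E) (blocked_E V E) P"
    and meets: "\<And>A B. R A B \<Longrightarrow> A \<inter> B \<noteq> {}"
  obtains r where "r \<in> T" "\<And>x. x \<in> blocked_clique V E \<Longrightarrow> r \<in> P x"
proof -
  let ?K = "blocked_clique V E"
  have ps: "is_path_set T F (P x)" if "x \<in> ?K" for x
    using path_model_path_set[OF model] blocked_clique_subset that by blast
  obtain v0 where "v0 \<in> V" using V by blast
  then have Bro: "Bro 0 v0 \<in> ?K" by (auto simp: blocked_clique_def)
  have "\<exists>r. \<forall>A\<in>P ` ?K. r \<in> A"
  proof (rule path_sets_Helly)
    show "finite (P ` ?K)" using finite_blocked_clique[OF G] by simp
    show "P ` ?K \<noteq> {}" using Bro by auto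
    show "\<forall>A\<in>P ` ?K. is_path_set T F A" using ps by blast
    have "P x \<inter> P y \<noteq> {}" if "x \<in> ?K" "y \<in> ?K" for x y
    proof (cases "x = y")
      case True then show ?thesis using ps[OF that(1)] path_set_subset_nonempty by auto
    next
      case False
      then show ?thesis
        using meets path_model_edge_iff[OF model] blocked_E_clique[OF that False]
          blocked_clique_subset that by blast
    qed
    then show "\<forall>A\<in>P ` ?K. \<forall>B\<in>P ` ?K. A \<inter> B \<noteq> {}" by blast
  qed
  then obtain r where r: "\<And>x. x \<in> ?K \<Longrightarrow> r \<in> P x" by blast
  have "r \<in> T" using r[OF Bro] ps[OF Bro] path_set_subset_nonempty by auto
  then show thesis using that r by blast
qed

lemma colourable_if_copy_avoids_root:
  assumes deg: "max_degree_le k T F" and G: "sgraph V E" and r: "r \<in> T"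
    and model: "path_model R T F (blocked_V V E) (blocked_E V E) P"
    and R_sym: "\<And>A B. R A B \<longleftrightarrow> R B A" and sep: "edge_gadget_separates R r"
    and root: "\<And>x. x \<in> blocked_clique V E \<Longrightarrow> r \<in> P x"
    and i: "i < 6" and avoid: "\<And>v. v \<in> V \<Longrightarrow> r \<notin> P (VRep i v)"
  shows "colourable k V E"
proof (rule colourable_if_branches_separate[OF r deg G, of "\<lambda>v. P (VRep i v)"])
  show "is_path_set T F (P (VRep i v)) \<and> r \<notin> P (VRep i v)" if "v \<in> V" for v
    using path_model_path_set[OF model VRep_in_blocked_V[OF i that]] avoid[OF that] by blast
next
  fix u v a b assume uv: "{u, v} \<in> E" "u \<in> V" "v \<in> V" "u \<noteq> v"
    and ab: "a \<in> P (VRep i u)" "b \<in> P (VRep i v)"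
  let ?e = "ERep i {u, v}"
  have clique: "?e \<in> blocked_clique V E" "Bro i u \<in> blocked_clique V E" "Bro i v \<in> blocked_clique V E"
    using i uv by (auto simp: blocked_clique_def)
  have vert: "VRep i u \<in> blocked_V V E" "VRep i v \<in> blocked_V V E"
    using uv by (simp_all add: VRep_in_blocked_V[OF i])
  have rel: "{x, y} \<in> blocked_E V E \<longleftrightarrow> R (P y) (P x)"
    if "x \<in> blocked_V V E" "y \<in> blocked_V V E" "x \<noteq> y" for x y
    using path_model_edge_iff[OF model that] R_sym by blast
  have ps: "is_path_set T F (P x)" if "x \<in> blocked_V V E" for x
    using path_model_path_set[OF model that] .
  have Kin: "?e \<in> blocked_V V E" "Bro i u \<in> blocked_V V E" "Bro i v \<in> blocked_V V E"
    using clique blocked_clique_subset by auto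
  have "R (P ?e) (P (VRep i u))" "R (P ?e) (P (VRep i v))"
    "R (P (Bro i u)) (P (VRep i u))" "R (P (Bro i v)) (P (VRep i v))"
    using rel[OF vert(1) Kin(1)] rel[OF vert(2) Kin(1)] rel[OF vert(1) Kin(2)] rel[OF vert(2) Kin(3)]
      blocked_E_vertex_edge[OF i uv(1), of u V] blocked_E_vertex_edge[OF i uv(1), of v V]
      blocked_E_vertex_brother[OF i uv(2), of E] blocked_E_vertex_brother[OF i uv(3), of E] by auto
  moreover have "\<not> R (P (VRep i u)) (P (VRep i v))"
    "\<not> R (P (Bro i v)) (P (VRep i u))" "\<not> R (P (Bro i u)) (P (VRep i v))"
    using rel[OF vert(2) vert(1)] rel[OF vert(1) Kin(3)] rel[OF vert(2) Kin(2)]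
      blocked_E_not_vertex_vertex[of i v i u V E] blocked_E_not_vertex_brother[of i u i v V E]
      blocked_E_not_vertex_brother[of i v i u V E] uv by auto
  moreover have "\<forall>P\<in>{P (VRep i u), P (VRep i v), P ?e, P (Bro i u), P (Bro i v)}. is_path_set T F P"
    using ps vert Kin by auto
  ultimately show "branch r a \<noteq> branch r b"
    using sep ab avoid uv root clique unfolding edge_gadget_separates_def by blast
qed

end

lemma overlap_model_copy_avoids_root:
  assumes model: "path_model overlap T F (blocked_V V E) (blocked_E V E) P"
    and root: "\<And>x. x \<in> blocked_clique V E \<Longrightarrow> r \<in> P x"
  obtains i where "i < 3" "\<And>v. v \<in> V \<Longrightarrow> r \<notin> P (VRep i v)"
proof -
  have "\<exists>i<3. \<forall>v\<in>V. r \<notin> P (VRep i v)"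
  proof (rule ccontr)
    assume "\<not> ?thesis"
    then obtain vs where vs: "\<And>i. i < 3 \<Longrightarrow> vs i \<in> V \<and> r \<in> P (VRep i (vs i))" by metis
    have Bro: "Bro i (vs i) \<in> blocked_clique V E" "Bro i (vs i) \<in> blocked_V V E"
      and VRep: "VRep i (vs i) \<in> blocked_V V E" if "i < 3" for i
      using vs[OF that] that by (auto simp: blocked_clique_def blocked_V_def)
    note rel = path_model_edge_iff[OF model]
    show False
    proof (rule three_rooted_overlap_pairs_False[of r "\<lambda>i. P (VRep i (vs i))" "\<lambda>i. P (Bro i (vs i))"])
      fix i :: nat assume i: "i < 3"
      show "r \<in> P (VRep i (vs i)) \<and> r \<in> P (Bro i (vs i)) \<and>
          overlap (P (VRep i (vs i))) (P (Bro i (vs i)))"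
        using vs[OF i] root[OF Bro(1)[OF i]] rel[OF VRep[OF i] Bro(2)[OF i]]
          blocked_E_vertex_brother[of i "vs i" V E] i by simp
    next
      fix i j :: nat assume ij: "i < 3" "j < 3" "i \<noteq> j"
      show "\<not> overlap (P (VRep i (vs i))) (P (VRep j (vs j))) \<and>
         \<not> overlap (P (Bro i (vs i))) (P (VRep j (vs j))) \<and> overlap (P (Bro i (vs i))) (P (Bro j (vs j)))"
        using rel[OF VRep[OF ij(1)] VRep[OF ij(2)]] rel[OF VRep[OF ij(2)] Bro(2)[OF ij(1)]]
          rel[OF Bro(2)[OF ij(1)] Bro(2)[OF ij(2)]] blocked_E_not_vertex_vertex[of i "vs i" j "vs j" V E]
          blocked_E_not_vertex_brother[of j "vs j" i "vs i"] blocked_E_clique[OF Bro(1)[OF ij(1)] Bro(1)[OF ij(2)]]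
          ij by (simp add: overlap_commute)
    qed
  qed
  then show thesis using that by blast
qed

lemma intersection_model_copy_avoids_root:
  assumes model: "path_model (\<lambda>A B. A \<inter> B \<noteq> {}) T F (blocked_V V E) (blocked_E V E) P"
    and root: "\<And>x. x \<in> blocked_clique V E \<Longrightarrow> r \<in> P x" and v: "v \<in> V"
  shows "r \<notin> P (VRep 0 v)"
proof -
  have K: "Bro 1 v \<in> blocked_clique V E" using v by (auto simp: blocked_clique_def)
  have "{VRep 0 v, Bro 1 v} \<notin> blocked_E V E" by (rule blocked_E_not_vertex_brother) simp
  then have "P (VRep 0 v) \<inter> P (Bro 1 v) = {}"
    using path_model_edge_iff[OF model VRep_in_blocked_V[of 0 v V E] _, of "Bro 1 v"] v K
      blocked_clique_subset by auto
  then show ?thesis using root[OF K] by blast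
qed

lemma colourable_if_overlap_path_graph:
  assumes G: "sgraph V E" and V: "V \<noteq> {}"
    and H: "overlap_path_graph k (blocked_V V E) (blocked_E V E)"
  shows "colourable k V E"
proof -
  obtain T :: "nat set" and F P where tree: "is_tree T F" and deg: "max_degree_le k T F"
    and model: "path_model overlap T F (blocked_V V E) (blocked_E V E) P"
    using H unfolding overlap_path_graph_iff by blast
  interpret tree T F using tree by unfold_locales
  obtain r where r: "r \<in> T" and root: "\<And>x. x \<in> blocked_clique V E \<Longrightarrow> r \<in> P x"
    using blocked_clique_common_node[OF G V model overlap_imp_Int_nonempty] by blast
  obtain i where i: "i < 3" and avoid: "\<And>v. v \<in> V \<Longrightarrow> r \<notin> P (VRep i v)"
    using overlap_model_copy_avoids_root[OF model root] by blast
  show ?thesis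
    by (rule colourable_if_copy_avoids_root[OF deg G r model overlap_commute edge_gadget_separates_overlap[OF r] root])
      (use i avoid in auto)
qed

lemma colourable_if_intersection_path_graph:
  assumes G: "sgraph V E" and V: "V \<noteq> {}"
    and H: "intersection_path_graph k (blocked_V V E) (blocked_E V E)"
  shows "colourable k V E"
proof -
  obtain T :: "nat set" and F P where tree: "is_tree T F" and deg: "max_degree_le k T F"
    and model: "path_model (\<lambda>A B. A \<inter> B \<noteq> {}) T F (blocked_V V E) (blocked_E V E) P"
    using H unfolding intersection_path_graph_iff by blast
  interpret tree T F using tree by unfold_locales
  obtain r where r: "r \<in> T" and root: "\<And>x. x \<in> blocked_clique V E \<Longrightarrow> r \<in> P x"
    using blocked_clique_common_node[OF G V model] by blast
  show ?thesis
  proof (rule colourable_if_copy_avoids_root[where i = 0, OF deg G r model _ edge_gadget_separates_intersection[OF r]])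
    show "r \<notin> P (VRep 0 v)" if "v \<in> V" for v
      using intersection_model_copy_avoids_root[OF model root that] .
  qed (use root in auto)
qed

section \<open>Representations from colourings\<close>

locale parent_map =
  fixes T :: "'n set" and r :: 'n and par :: "'n \<Rightarrow> 'n" and rank :: "'n \<Rightarrow> nat"
  assumes finite_T: "finite T" and root: "r \<in> T"
    and par: "\<And>x. x \<in> T \<Longrightarrow> x \<noteq> r \<Longrightarrow> par x \<in> T \<and> rank (par x) < rank x"
begin

definition edges :: "'n set set" where
  "edges = {{x, par x} | x. x \<in> T \<and> x \<noteq> r}"

lemma sgraph: "sgraph T edges"
proof -
  have "card {x, par x} = 2" if "x \<in> T" "x \<noteq> r" for x
    using par[OF that] by (cases "par x = x") auto
  then show ?thesis using finite_T par unfolding sgraph_def edges_def by auto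
qed

lemma connected: "connected_on T edges"
proof -
  define R where "R = (\<lambda>x y. x \<in> T \<and> y \<in> T \<and> {x, y} \<in> edges)"
  have step: "R x (par x) \<and> R (par x) x" if "x \<in> T" "x \<noteq> r" for x
    using par[OF that] that unfolding R_def edges_def by (auto simp: insert_commute)
  have reach: "R\<^sup>*\<^sup>* u r \<and> R\<^sup>*\<^sup>* r u" if "u \<in> T" for u
    using that
  proof (induction "rank u" arbitrary: u rule: less_induct)
    case less
    show ?case
    proof (cases "u = r")
      case False
      then have "R\<^sup>*\<^sup>* (par u) r \<and> R\<^sup>*\<^sup>* r (par u)" using less par by blast
      then show ?thesis using step[OF less.prems False]
        by (meson converse_rtranclp_into_rtranclp rtranclp.rtrancl_into_rtrancl)
    qed simp
  qed
  show ?thesis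
    unfolding connected_on_def using root reach by (auto simp: R_def[symmetric] intro: rtranclp_trans)
qed

lemma edge_to_parent:
  assumes "{x, y} \<in> edges" "rank y \<le> rank x" shows "y = par x"
proof -
  obtain z where z: "{x, y} = {z, par z}" "z \<in> T" "z \<noteq> r" using assms(1) by (auto simp: edges_def)
  have "x \<noteq> y" using sgraph assms(1) by (auto simp: sgraph_def card_2_iff)
  then consider "x = z" "y = par z" | "x = par z" "y = z" using z(1) by (auto simp: doubleton_eq_iff)
  then show ?thesis using par[OF z(2,3)] assms(2) by cases auto
qed

text \<open>On a cycle, both neighbours of a node of maximal rank would be its parent.\<close>
lemma acyclic: "\<not> has_cycle T edges"
proof
  assume "has_cycle T edges"
  then obtain xs where w: "is_walk T edges xs" and d: "distinct xs" and l: "length xs \<ge> 3"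
    and cl: "{last xs, hd xs} \<in> edges" unfolding has_cycle_def by blast
  define n where "n = length xs"
  define sc where "sc j = (if j = n - 1 then 0 else Suc j)" for j
  have ne: "xs \<noteq> []" using l by auto
  have edge: "{xs ! j, xs ! sc j} \<in> edges" if "j < n" for j
    using w that cl by (auto simp: is_walk_def sc_def n_def last_conv_nth[OF ne] hd_conv_nth[OF ne])
  have "Max (rank ` set xs) \<in> rank ` set xs" using ne by (intro Max_in) auto
  then obtain i where i: "i < n" "rank (xs ! i) = Max (rank ` set xs)"
    by (auto simp: in_set_conv_nth n_def)
  have mx: "rank (xs ! j) \<le> rank (xs ! i)" if "j < n" for j
    using i that by (auto simp: n_def)
  define p where "p = (if i = 0 then n - 1 else i - 1)"
  have pn: "p < n" and scp: "sc p = i" and scn: "sc i < n" and "sc i \<noteq> p"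
    using i l by (auto simp: p_def sc_def n_def)
  then have "xs ! sc i \<noteq> xs ! p" using d by (simp add: nth_eq_iff_index_eq n_def)
  moreover have "xs ! p = par (xs ! i)"
    using edge_to_parent edge[OF pn] scp mx[OF pn] by (simp add: insert_commute)
  moreover have "xs ! sc i = par (xs ! i)"
    using edge_to_parent edge[OF i(1)] mx[OF scn] by simp
  ultimately show False by simp
qed

lemma is_tree: "is_tree T edges"
  using sgraph connected acyclic by (simp add: is_tree_def)

lemma degree_le: "card {e \<in> edges. v \<in> e} \<le> (if v = r then 0 else 1) + card {x \<in> T. x \<noteq> r \<and> par x = v}"
proof -
  let ?ch = "{x \<in> T. x \<noteq> r \<and> par x = v}"
  have "{e \<in> edges. v \<in> e} \<subseteq> (if v = r then {} else {{v, par v}}) \<union> (\<lambda>x. {x, v}) ` ?ch"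
    by (auto simp: edges_def insert_commute)
  then have "card {e \<in> edges. v \<in> e} \<le> card ((if v = r then {} else {{v, par v}}) \<union> (\<lambda>x. {x, v}) ` ?ch)"
    using finite_T by (intro card_mono) auto
  also have "\<dots> \<le> card (if v = r then {} else {{v, par v}}) + card ((\<lambda>x. {x, v}) ` ?ch)"
    by (rule card_Un_le)
  also have "\<dots> \<le> (if v = r then 0 else 1) + card ?ch"
    using card_image_le[of ?ch "\<lambda>x. {x, v}"] finite_T by auto
  finally show ?thesis .
qed

end

lemma is_walk_map:
  assumes "is_walk T F xs" "g ` T \<subseteq> T'" "\<And>x y. {x, y} \<in> F \<Longrightarrow> {g x, g y} \<in> F'"
  shows "is_walk T' F' (map g xs)"
  using assms unfolding is_walk_def by (auto simp: subset_iff)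

context
  fixes f :: "'n \<Rightarrow> 'm" assumes inj: "inj f"
begin

lemma inv_image_edge: assumes "{y1, y2} \<in> (`) f ` F" shows "{inv f y1, inv f y2} \<in> F"
proof -
  obtain e where e: "e \<in> F" "{y1, y2} = f ` e" using assms by blast
  have "inv f ` {y1, y2} = e" using e(2) inj by (simp add: image_image)
  then show ?thesis using e(1) by simp
qed

lemma is_tree_image: assumes "is_tree T F" shows "is_tree (f ` T) ((`) f ` F)"
proof -
  have sg: "sgraph T F" and cn: "connected_on T F" and nc: "\<not> has_cycle T F"
    using assms by (auto simp: is_tree_def)
  have "sgraph (f ` T) ((`) f ` F)"
    using sg card_image[OF inj_on_subset[OF inj subset_UNIV]] by (auto simp: sgraph_def)
  moreover have "connected_on (f ` T) ((`) f ` F)"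
    unfolding connected_on_def
  proof (intro conjI ballI)
    show "f ` T \<noteq> {}" using cn by (simp add: connected_on_def)
    fix u' v' assume "u' \<in> f ` T" "v' \<in> f ` T"
    then obtain u v where uv: "u \<in> T" "v \<in> T" "u' = f u" "v' = f v" by blast
    have "(\<lambda>x y. x \<in> T \<and> y \<in> T \<and> {x, y} \<in> F)\<^sup>*\<^sup>* u v"
      using cn uv unfolding connected_on_def by blast
    then have "(\<lambda>x y. x \<in> f ` T \<and> y \<in> f ` T \<and> {x, y} \<in> (`) f ` F)\<^sup>*\<^sup>* (f u) (f v)"
    proof (induction rule: rtranclp_induct)
      case (step y z)
      moreover have "{f y, f z} = f ` {y, z}" by simp
      ultimately have "f y \<in> f ` T \<and> f z \<in> f ` T \<and> {f y, f z} \<in> (`) f ` F" by blast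
      then show ?case using step(3) by (simp add: rtranclp.rtrancl_into_rtrancl)
    qed simp
    then show "(\<lambda>x y. x \<in> f ` T \<and> y \<in> f ` T \<and> {x, y} \<in> (`) f ` F)\<^sup>*\<^sup>* u' v'" using uv by simp
  qed
  moreover have "\<not> has_cycle (f ` T) ((`) f ` F)"
  proof
    assume "has_cycle (f ` T) ((`) f ` F)"
    then obtain ys where w: "is_walk (f ` T) ((`) f ` F) ys" and d: "distinct ys"
      and l: "length ys \<ge> 3" and cl: "{last ys, hd ys} \<in> (`) f ` F"
      unfolding has_cycle_def by blast
    have "is_walk T F (map (inv f) ys)"
      by (rule is_walk_map[OF w _ inv_image_edge]) (use inj in auto)
    moreover have "distinct (map (inv f) ys)"
      using d w inj_on_inv_into[of "set ys" f UNIV] by (auto simp: distinct_map is_walk_def)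
    moreover have "{last (map (inv f) ys), hd (map (inv f) ys)} \<in> F"
    proof -
      have "ys \<noteq> []" using l by auto
      then show ?thesis using inv_image_edge[OF cl] by (simp add: last_map hd_map)
    qed
    ultimately have "has_cycle T F" using l unfolding has_cycle_def by (intro exI[of _ "map (inv f) ys"]) simp
    then show False using nc by simp
  qed
  ultimately show ?thesis by (simp add: is_tree_def)
qed

lemma max_degree_le_image:
  assumes "max_degree_le k T F" "finite F" shows "max_degree_le k (f ` T) ((`) f ` F)"
  unfolding max_degree_le_def
proof
  fix v' assume "v' \<in> f ` T"
  then obtain v where v: "v \<in> T" "v' = f v" by blast
  have "{e \<in> (`) f ` F. v' \<in> e} \<subseteq> (`) f ` {e \<in> F. v \<in> e}"
    using v inj_image_mem_iff[OF inj] by auto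
  then have "card {e \<in> (`) f ` F. v' \<in> e} \<le> card ((`) f ` {e \<in> F. v \<in> e})"
    using assms(2) by (intro card_mono) auto
  also have "\<dots> \<le> card {e \<in> F. v \<in> e}" by (rule card_image_le) (use assms(2) in simp)
  also have "\<dots> \<le> k" using assms v by (simp add: max_degree_le_def)
  finally show "card {e \<in> (`) f ` F. v' \<in> e} \<le> k" .
qed

lemma is_path_set_image: "is_path_set T F P \<Longrightarrow> is_path_set (f ` T) ((`) f ` F) (f ` P)"
proof -
  assume "is_path_set T F P"
  then obtain xs where "is_walk T F xs" "distinct xs" "set xs = P" unfolding is_path_set_def by blast
  moreover have "is_walk (f ` T) ((`) f ` F) (map f xs)"
  proof (rule is_walk_map[OF \<open>is_walk T F xs\<close>])
    fix x y assume "{x, y} \<in> F"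
    moreover have "{f x, f y} = f ` {x, y}" by simp
    ultimately show "{f x, f y} \<in> (`) f ` F" by blast
  qed simp
  ultimately show ?thesis
    unfolding is_path_set_def using distinct_map[of f xs] inj_on_subset[OF inj subset_UNIV]
    by (intro exI[of _ "map f xs"]) simp
qed

lemma overlap_image_iff: "overlap (f ` A) (f ` B) \<longleftrightarrow> overlap A B"
  by (simp only: overlap_def image_Int[OF inj, symmetric] image_set_diff[OF inj, symmetric] image_is_empty)

lemma image_Int_nonempty_iff: "f ` A \<inter> f ` B \<noteq> {} \<longleftrightarrow> A \<inter> B \<noteq> {}"
  by (simp only: image_Int[OF inj, symmetric] image_is_empty)

end

lemma nat_path_model_of_countable:
  fixes T :: "'n :: countable set" and R :: "'n set \<Rightarrow> 'n set \<Rightarrow> bool"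
  assumes tree: "is_tree T F" and deg: "max_degree_le k T F" and model: "path_model R T F V E P"
    and R': "\<And>A B. R' (to_nat ` A) (to_nat ` B) \<longleftrightarrow> R A B"
  shows "\<exists>(T' :: nat set) F' P'. is_tree T' F' \<and> max_degree_le k T' F' \<and> path_model R' T' F' V E P'"
proof (intro exI conjI)
  have inj: "inj (to_nat :: 'n \<Rightarrow> nat)" by simp
  show "is_tree (to_nat ` T) ((`) to_nat ` F)" by (rule is_tree_image[OF inj tree])
  show "max_degree_le k (to_nat ` T) ((`) to_nat ` F)"
    using max_degree_le_image[OF inj deg] tree.finite_edges[unfolded tree_def, OF tree] by blast
  show "path_model R' (to_nat ` T) ((`) to_nat ` F) V E (\<lambda>x. to_nat ` P x)"
    using model is_path_set_image[OF inj] R' by (simp add: path_model_def)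
qed

text \<open>The spider: a centre with legs \<open>b < k\<close>, each a spine \<open>Spine b 0, \<dots>, Spine b (N - 1)\<close> in which every
  \<open>Spine b j\<close> carries the pendant path \<open>Pendant b j, Tip b j\<close>.\<close>
datatype spider_node = Centre | Spine nat nat | Pendant nat nat | Tip nat nat

instance spider_node :: countable by countable_datatype

fun spider_parent :: "spider_node \<Rightarrow> spider_node" where
  "spider_parent Centre = Centre"
| "spider_parent (Spine b 0) = Centre"
| "spider_parent (Spine b (Suc j)) = Spine b j"
| "spider_parent (Pendant b j) = Spine b j"
| "spider_parent (Tip b j) = Pendant b j"

fun spider_depth :: "spider_node \<Rightarrow> nat" where
  "spider_depth Centre = 0"
| "spider_depth (Spine b j) = Suc j"
| "spider_depth (Pendant b j) = j + 2"
| "spider_depth (Tip b j) = j + 3"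

definition spider_nodes :: "nat \<Rightarrow> nat \<Rightarrow> spider_node set" where
  "spider_nodes k N = insert Centre ((\<lambda>(b, j). Spine b j) ` ({..<k} \<times> {..<N})
     \<union> (\<lambda>(b, j). Pendant b j) ` ({..<k} \<times> {..<N}) \<union> (\<lambda>(b, j). Tip b j) ` ({..<k} \<times> {..<N}))"

lemma spider_nodes_simps [simp]:
  "Centre \<in> spider_nodes k N"
  "Spine b j \<in> spider_nodes k N \<longleftrightarrow> b < k \<and> j < N"
  "Pendant b j \<in> spider_nodes k N \<longleftrightarrow> b < k \<and> j < N"
  "Tip b j \<in> spider_nodes k N \<longleftrightarrow> b < k \<and> j < N"
  by (auto simp: spider_nodes_def)

lemma spider_parent_map: "parent_map (spider_nodes k N) Centre spider_parent spider_depth"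
proof
  show "finite (spider_nodes k N)" by (simp add: spider_nodes_def)
  show "spider_parent x \<in> spider_nodes k N \<and> spider_depth (spider_parent x) < spider_depth x"
    if "x \<in> spider_nodes k N" "x \<noteq> Centre" for x
    using that by (cases x rule: spider_parent.cases) auto
qed simp

definition spider_edges :: "nat \<Rightarrow> nat \<Rightarrow> spider_node set set" where
  "spider_edges k N = parent_map.edges (spider_nodes k N) Centre spider_parent"

lemma is_tree_spider: "is_tree (spider_nodes k N) (spider_edges k N)"
  unfolding spider_edges_def by (rule parent_map.is_tree[OF spider_parent_map])

lemma spider_edge: "x \<in> spider_nodes k N \<Longrightarrow> x \<noteq> Centre \<Longrightarrow> {x, spider_parent x} \<in> spider_edges k N"
  by (auto simp: spider_edges_def parent_map.edges_def[OF spider_parent_map])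

lemma max_degree_spider: assumes "k \<ge> 3" shows "max_degree_le k (spider_nodes k N) (spider_edges k N)"
  unfolding max_degree_le_def
proof
  fix v assume "v \<in> spider_nodes k N"
  define ch where "ch = {x \<in> spider_nodes k N. x \<noteq> Centre \<and> spider_parent x = v}"
  have "(if v = Centre then 0 else 1) + card ch \<le> k"
  proof (cases v)
    case Centre
    have "ch \<subseteq> (\<lambda>b. Spine b 0) ` {..<k}"
      unfolding ch_def Centre by (auto elim: spider_parent.elims)
    then have "card ch \<le> card ((\<lambda>b. Spine b 0) ` {..<k})" by (intro card_mono) auto
    also have "\<dots> \<le> k" using card_image_le[of "{..<k}" "\<lambda>b. Spine b 0"] by simp
    finally show ?thesis using Centre by simp
  next
    case (Spine b j)
    have "ch \<subseteq> {Spine b (Suc j), Pendant b j}"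
      unfolding ch_def Spine by (auto elim: spider_parent.elims)
    then have "card ch \<le> 2" using card_mono[of "{Spine b (Suc j), Pendant b j}" ch] card_insert_le_m1 by fastforce
    then show ?thesis using Spine assms by simp
  next
    case (Pendant b j)
    have "ch \<subseteq> {Tip b j}" unfolding ch_def Pendant by (auto elim: spider_parent.elims)
    then have "card ch \<le> 1" using card_mono[of "{Tip b j}" ch] by simp
    then show ?thesis using Pendant assms by simp
  next
    case (Tip b j)
    have "ch = {}" unfolding ch_def Tip by (auto elim: spider_parent.elims)
    then show ?thesis using Tip assms by simp
  qed
  then show "card {e \<in> spider_edges k N. v \<in> e} \<le> k"
    using parent_map.degree_le[OF spider_parent_map[of k N], of v] unfolding spider_edges_def ch_def by linarith
qed
locale spider_model =
  fixes V :: "'a set" and E :: "'a set set" and k :: nat and c :: "'a \<Rightarrow> nat" and idx :: "'a \<Rightarrow> nat"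
  assumes sgraph_VE: "sgraph V E" and k3: "k \<ge> 3" and colour_less: "\<And>v. v \<in> V \<Longrightarrow> c v < k"
    and colour_proper: "\<And>e u v. e \<in> E \<Longrightarrow> e = {u, v} \<Longrightarrow> c u \<noteq> c v"
    and idx_bij: "bij_betw idx V {0..<card V}"
begin

definition n :: nat where "n = card V"
definition leg_length :: nat where "leg_length = 6 * n + 1"
definition slot :: "nat \<Rightarrow> 'a \<Rightarrow> nat" where "slot i v = i * n + idx v"
definition other_colour :: "'a \<Rightarrow> nat" where "other_colour v = (c v + 1) mod k"
definition spine_walk :: "nat \<Rightarrow> nat \<Rightarrow> spider_node list" where
  "spine_walk b j = Centre # map (Spine b) [0..<j]"
definition arm_walk :: "nat \<Rightarrow> nat \<Rightarrow> spider_node list" where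
  "arm_walk b j = spine_walk b (Suc j) @ [Pendant b j]"
definition spT :: "spider_node set" where "spT = spider_nodes k leg_length"
definition spF :: "spider_node set set" where "spF = spider_edges k leg_length"

lemma idx_less: "v \<in> V \<Longrightarrow> idx v < n"
  using idx_bij by (auto simp: bij_betw_def n_def)

lemma idx_eq: "v \<in> V \<Longrightarrow> w \<in> V \<Longrightarrow> idx v = idx w \<Longrightarrow> v = w"
  using idx_bij by (auto simp: bij_betw_def inj_on_def)

lemma slot_less: assumes "i < 6" "v \<in> V" shows "slot i v < 6 * n"
proof -
  have "i * n \<le> 5 * n" using assms(1) by (intro mult_le_mono1) simp
  then show ?thesis using idx_less[OF assms(2)] unfolding slot_def by linarith
qed

lemma slot_less_leg_length: "i < 6 \<Longrightarrow> v \<in> V \<Longrightarrow> slot i v < leg_length"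
  using slot_less[of i v] unfolding leg_length_def by linarith

lemma slot_eq_iff: assumes "v \<in> V" "w \<in> V" shows "slot i v = slot j w \<longleftrightarrow> i = j \<and> v = w"
proof
  assume h: "slot i v = slot j w"
  have "idx v < n" "idx w < n" using idx_less assms by auto
  then have "slot i v div n = i" "slot j w div n = j" "slot i v mod n = idx v" "slot j w mod n = idx w"
    by (auto simp: slot_def)
  then show "i = j \<and> v = w" using h idx_eq assms by metis
qed simp

lemma other_colour_less: "other_colour v < k"
  using k3 by (simp add: other_colour_def)

lemma other_colour_neq: assumes "v \<in> V" shows "other_colour v \<noteq> c v"
proof -
  have "c v < k" using colour_less assms .
  then show ?thesis using k3 unfolding other_colour_def
    by (cases "Suc (c v) < k") (auto simp: mod_if)
qed

lemma set_spine_walk: "set (spine_walk b j) = insert Centre (Spine b ` {..<j})"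
  by (auto simp: spine_walk_def)

lemma set_arm_walk: "set (arm_walk b j) = insert Centre (insert (Pendant b j) (Spine b ` {..j}))"
  by (auto simp: arm_walk_def spine_walk_def)

lemma adj_spider_parent: "x \<in> spT \<Longrightarrow> x \<noteq> Centre \<Longrightarrow> adj spF x (spider_parent x)"
  using spider_edge by (simp add: adj_def spF_def spT_def)

lemma adj_Centre_Spine: "b < k \<Longrightarrow> adj spF Centre (Spine b 0)"
  using adj_spider_parent[of "Spine b 0"] by (simp add: spT_def leg_length_def adj_sym)

lemma adj_Spine_Spine: "b < k \<Longrightarrow> Suc t < leg_length \<Longrightarrow> adj spF (Spine b t) (Spine b (Suc t))"
  using adj_spider_parent[of "Spine b (Suc t)"] by (simp add: spT_def adj_sym)

lemma adj_Spine_Pendant: "b < k \<Longrightarrow> t < leg_length \<Longrightarrow> adj spF (Spine b t) (Pendant b t)"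
  using adj_spider_parent[of "Pendant b t"] by (simp add: spT_def adj_sym)

lemma adj_Pendant_Tip: "b < k \<Longrightarrow> t < leg_length \<Longrightarrow> adj spF (Pendant b t) (Tip b t)"
  using adj_spider_parent[of "Tip b t"] by (simp add: spT_def adj_sym)

lemma spine_walk_Suc: "spine_walk b (Suc j) = spine_walk b j @ [Spine b j]"
  by (simp add: spine_walk_def)

lemma last_spine_walk: "last (spine_walk b (Suc j)) = Spine b j"
  by (simp add: spine_walk_Suc)

lemma successively_spine_walk: "b < k \<Longrightarrow> j \<le> leg_length \<Longrightarrow> successively (adj spF) (spine_walk b j)"
proof (induction j)
  case 0 then show ?case by (simp add: spine_walk_def)
next
  case (Suc j)
  have IH: "successively (adj spF) (spine_walk b j)" using Suc by simp
  have "adj spF (last (spine_walk b j)) (Spine b j)"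
  proof (cases j)
    case 0 then show ?thesis using adj_Centre_Spine Suc.prems by (simp add: spine_walk_def)
  next
    case (Suc j')
    then show ?thesis using adj_Spine_Spine[of b j'] Suc.prems \<open>j = Suc j'\<close> by (simp add: last_spine_walk)
  qed
  then show ?case using IH unfolding spine_walk_Suc by (simp add: successively_append_iff)
qed

lemma set_spine_walk_subset: "b < k \<Longrightarrow> j \<le> leg_length \<Longrightarrow> set (spine_walk b j) \<subseteq> spT"
  by (auto simp: set_spine_walk spT_def)

lemma distinct_spine_walk: "distinct (spine_walk b j)"
  by (auto simp: spine_walk_def distinct_map inj_on_def)

lemma simple_walk_arm_walk: assumes "b < k" "j < leg_length" shows "simple_walk spT spF Centre (Pendant b j) (arm_walk b j)"
proof -
  have "successively (adj spF) (spine_walk b (Suc j) @ [Pendant b j])"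
    using successively_spine_walk[of b "Suc j"] assms adj_Spine_Pendant[OF assms] by (simp add: successively_append_iff last_spine_walk)
  moreover have "distinct (arm_walk b j)" using distinct_spine_walk[of b "Suc j"] by (auto simp: arm_walk_def set_spine_walk)
  moreover have "set (arm_walk b j) \<subseteq> spT" using assms by (auto simp: set_arm_walk spT_def)
  ultimately show ?thesis by (auto simp: simple_walk_def arm_walk_def spine_walk_def)
qed

lemma simple_walk_spine_walk: assumes "b < k" shows "simple_walk spT spF Centre (Spine b (leg_length - 1)) (spine_walk b leg_length)"
proof -
  have leg_length: "leg_length = Suc (6 * n)" by (simp add: leg_length_def)
  show ?thesis
    using successively_spine_walk[of b leg_length] assms distinct_spine_walk[of b leg_length]
      set_spine_walk_subset[of b leg_length] last_spine_walk[of b "6 * n"]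
    unfolding leg_length by (auto simp: simple_walk_def spine_walk_def)
qed

lemma is_tree_spT: "is_tree spT spF" unfolding spT_def spF_def by (rule is_tree_spider)

text \<open>The model: a vertex \<open>v\<close> of copy \<open>i\<close> is the pendant path at its own slot on the leg of its colour;
  an edge \<open>uv\<close> runs between the pendants of \<open>u\<close> and \<open>v\<close> through the centre (they lie on different legs
  since \<open>c u \<noteq> c v\<close>); the brother of \<open>v\<close> runs from the pendant of \<open>v\<close> through the centre to the far end of
  another leg. All slots are below \<open>6 n\<close>, so the far end \<open>Spine b (6 n)\<close> of a leg lies on no edge-path.\<close>
definition path_of :: "'a blk \<Rightarrow> spider_node set" where
  "path_of x = (case x of VRep i v \<Rightarrow> {Pendant (c v) (slot i v), Tip (c v) (slot i v)}
     | Bro i v \<Rightarrow> set (arm_walk (c v) (slot i v)) \<union> set (spine_walk (other_colour v) leg_length)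
     | ERep i e \<Rightarrow> insert Centre (\<Union>u\<in>e. set (arm_walk (c u) (slot i u))))"

lemma edge_vertex: "e \<in> E \<Longrightarrow> u \<in> e \<Longrightarrow> u \<in> V"
  using sgraph_VE by (auto simp: sgraph_def)

lemma edge_obtain: assumes "e \<in> E" obtains u w where "e = {u, w}" "u \<noteq> w" "u \<in> V" "w \<in> V"
proof -
  have "card e = 2" using sgraph_VE assms by (auto simp: sgraph_def)
  then obtain u w where "e = {u, w}" "u \<noteq> w" by (auto simp: card_2_iff)
  then show ?thesis using that edge_vertex[OF assms] by blast
qed

lemma path_of_VRep: "path_of (VRep i v) = {Pendant (c v) (slot i v), Tip (c v) (slot i v)}"
  by (simp add: path_of_def)

lemma path_of_Bro: "path_of (Bro i v) = insert Centre (insert (Pendant (c v) (slot i v))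
    (Spine (c v) ` {..slot i v} \<union> Spine (other_colour v) ` {..<leg_length}))"
  by (auto simp: path_of_def set_arm_walk set_spine_walk)

lemma path_of_ERep: "path_of (ERep i e) = insert Centre (\<Union>u\<in>e. insert (Pendant (c u) (slot i u)) (Spine (c u) ` {..slot i u}))"
  by (auto simp: path_of_def set_arm_walk)

lemma path_set_VRep: assumes "i < 6" "v \<in> V" shows "is_path_set spT spF (path_of (VRep i v))"
proof -
  have "adj spF (Pendant (c v) (slot i v)) (Tip (c v) (slot i v))"
    using adj_Pendant_Tip colour_less slot_less_leg_length assms by blast
  then have "is_walk spT spF [Pendant (c v) (slot i v), Tip (c v) (slot i v)]"
    using colour_less slot_less_leg_length assms by (auto simp: is_walk_def adj_def spT_def nth_Cons split: nat.splits)
  then show ?thesis unfolding is_path_set_def path_of_VRep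
    by (intro exI[of _ "[Pendant (c v) (slot i v), Tip (c v) (slot i v)]"]) auto
qed

lemma path_set_Bro: assumes "i < 6" "v \<in> V" shows "is_path_set spT spF (path_of (Bro i v))"
proof -
  let ?a = "arm_walk (c v) (slot i v)" and ?s = "spine_walk (other_colour v) leg_length"
  have a: "simple_walk spT spF Centre (Pendant (c v) (slot i v)) ?a"
    using simple_walk_arm_walk colour_less slot_less_leg_length assms by blast
  have s: "simple_walk spT spF Centre (Spine (other_colour v) (leg_length - 1)) ?s"
    using simple_walk_spine_walk other_colour_less assms by blast
  have "set ?a \<inter> set ?s = {Centre}"
    using other_colour_neq[OF assms(2)] by (auto simp: set_arm_walk set_spine_walk)
  then have "is_path_set spT spF (set (rev ?a @ tl ?s))"
    using simple_walk_path_set[OF simple_walk_append[OF simple_walk_rev[OF a] s]] by simp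
  moreover have "set (rev ?a @ tl ?s) = set ?a \<union> set ?s"
    using set_append_tl_simple_walk[OF s, of "rev ?a"] simple_walk_ends[OF a] by simp
  ultimately show ?thesis by (simp add: path_of_def)
qed

lemma path_set_ERep: assumes "i < 6" "e \<in> E" shows "is_path_set spT spF (path_of (ERep i e))"
proof -
  obtain u w where uw: "e = {u, w}" "u \<noteq> w" "u \<in> V" "w \<in> V" using edge_obtain[OF assms(2)] by blast
  let ?a = "arm_walk (c u) (slot i u)" and ?b = "arm_walk (c w) (slot i w)"
  have a: "simple_walk spT spF Centre (Pendant (c u) (slot i u)) ?a"
    and b: "simple_walk spT spF Centre (Pendant (c w) (slot i w)) ?b"
    using simple_walk_arm_walk colour_less slot_less_leg_length assms uw by blast+
  have "set ?a \<inter> set ?b = {Centre}"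
    using colour_proper[OF assms(2) uw(1)] by (auto simp: set_arm_walk)
  then have "is_path_set spT spF (set (rev ?a @ tl ?b))"
    using simple_walk_path_set[OF simple_walk_append[OF simple_walk_rev[OF a] b]] by simp
  moreover have "set (rev ?a @ tl ?b) = set ?a \<union> set ?b"
    using set_append_tl_simple_walk[OF b, of "rev ?a"] simple_walk_ends[OF a] by simp
  moreover have "set ?a \<union> set ?b = path_of (ERep i e)"
    unfolding path_of_def uw by (auto simp: set_arm_walk)
  ultimately show ?thesis by simp
qed

lemma Pendant_in_Bro: "Pendant b t \<in> path_of (Bro i v) \<longleftrightarrow> b = c v \<and> t = slot i v"
  by (auto simp: path_of_Bro)

lemma Tip_notin_Bro: "Tip b t \<notin> path_of (Bro i v)"
  by (auto simp: path_of_Bro)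

lemma Pendant_in_ERep: "Pendant b t \<in> path_of (ERep i e) \<longleftrightarrow> (\<exists>u\<in>e. b = c u \<and> t = slot i u)"
  by (auto simp: path_of_ERep)

lemma Tip_notin_ERep: "Tip b t \<notin> path_of (ERep i e)"
  by (auto simp: path_of_ERep)

lemma Centre_in_clique: "Centre \<in> path_of (Bro i v)" "Centre \<in> path_of (ERep i e)"
  by (auto simp: path_of_Bro path_of_ERep)

lemma VRep_VRep_disjoint: assumes "v \<in> V" "w \<in> V" "(i, v) \<noteq> (j, w)"
  shows "path_of (VRep i v) \<inter> path_of (VRep j w) = {}"
  using assms slot_eq_iff[OF assms(1,2), of i j] by (auto simp: path_of_VRep)

lemma VRep_Bro_overlap: "overlap (path_of (VRep i v)) (path_of (Bro i v))"
proof -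
  have "Pendant (c v) (slot i v) \<in> path_of (VRep i v) \<inter> path_of (Bro i v)"
    by (simp add: path_of_VRep Pendant_in_Bro)
  moreover have "Tip (c v) (slot i v) \<in> path_of (VRep i v) - path_of (Bro i v)"
    by (simp add: path_of_VRep Tip_notin_Bro)
  moreover have "Centre \<in> path_of (Bro i v) - path_of (VRep i v)"
    by (simp add: path_of_VRep Centre_in_clique)
  ultimately show ?thesis unfolding overlap_def by blast
qed

lemma VRep_Bro_disjoint: assumes "v \<in> V" "w \<in> V" "(i, v) \<noteq> (j, w)"
  shows "path_of (VRep i v) \<inter> path_of (Bro j w) = {}"
  using assms slot_eq_iff[OF assms(1,2), of i j] by (auto simp: path_of_VRep Pendant_in_Bro Tip_notin_Bro)

lemma VRep_ERep_overlap: assumes "v \<in> e" shows "overlap (path_of (VRep i v)) (path_of (ERep i e))"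
proof -
  have "Pendant (c v) (slot i v) \<in> path_of (VRep i v) \<inter> path_of (ERep i e)"
    using assms by (auto simp: path_of_VRep Pendant_in_ERep)
  moreover have "Tip (c v) (slot i v) \<in> path_of (VRep i v) - path_of (ERep i e)"
    by (simp add: path_of_VRep Tip_notin_ERep)
  moreover have "Centre \<in> path_of (ERep i e) - path_of (VRep i v)"
    by (simp add: path_of_VRep Centre_in_clique)
  ultimately show ?thesis unfolding overlap_def by blast
qed

lemma VRep_ERep_disjoint: assumes "v \<in> V" "e \<in> E" "\<not> (i = j \<and> v \<in> e)"
  shows "path_of (VRep i v) \<inter> path_of (ERep j e) = {}"
proof -
  have "Pendant (c v) (slot i v) \<notin> path_of (ERep j e)"
  proof
    assume "Pendant (c v) (slot i v) \<in> path_of (ERep j e)"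
    then obtain u where "u \<in> e" "slot i v = slot j u" by (auto simp: Pendant_in_ERep)
    then show False using slot_eq_iff[OF assms(1) edge_vertex[OF assms(2)], of u i j] assms(3) by auto
  qed
  then show ?thesis by (auto simp: path_of_VRep Tip_notin_ERep)
qed

lemma Bro_not_subset_Bro: assumes "v \<in> V" "w \<in> V" "(i, v) \<noteq> (j, w)"
  shows "path_of (Bro i v) - path_of (Bro j w) \<noteq> {}"
proof -
  have "Pendant (c v) (slot i v) \<in> path_of (Bro i v) - path_of (Bro j w)"
    using assms slot_eq_iff[OF assms(1,2), of i j] by (auto simp: Pendant_in_Bro)
  then show ?thesis by blast
qed

lemma Bro_not_subset_ERep: assumes "i < 6" "j < 6" "v \<in> V" "e \<in> E"
  shows "path_of (Bro i v) - path_of (ERep j e) \<noteq> {}"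
proof -
  have "Spine (other_colour v) (leg_length - 1) \<notin> path_of (ERep j e)"
  proof
    assume "Spine (other_colour v) (leg_length - 1) \<in> path_of (ERep j e)"
    then obtain u where "u \<in> e" "leg_length - 1 \<le> slot j u" by (auto simp: path_of_ERep)
    then show False using slot_less[OF assms(2) edge_vertex[OF assms(4)], of u] by (simp add: leg_length_def)
  qed
  moreover have "Spine (other_colour v) (leg_length - 1) \<in> path_of (Bro i v)"
    by (auto simp: path_of_Bro leg_length_def)
  ultimately show ?thesis by blast
qed

lemma ERep_not_subset_Bro: assumes "i < 6" "j < 6" "v \<in> V" "e \<in> E"
  shows "path_of (ERep j e) - path_of (Bro i v) \<noteq> {}"
proof -
  obtain u w where uw: "e = {u, w}" "u \<noteq> w" "u \<in> V" "w \<in> V" using edge_obtain[OF assms(4)] by blast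
  have "slot j u \<noteq> slot j w" using slot_eq_iff[OF uw(3,4)] uw(2) by simp
  then have "Pendant (c u) (slot j u) \<notin> path_of (Bro i v) \<or> Pendant (c w) (slot j w) \<notin> path_of (Bro i v)"
    by (auto simp: Pendant_in_Bro)
  moreover have "Pendant (c u) (slot j u) \<in> path_of (ERep j e)" "Pendant (c w) (slot j w) \<in> path_of (ERep j e)"
    using uw by (auto simp: Pendant_in_ERep)
  ultimately show ?thesis by blast
qed

lemma ERep_not_subset_ERep: assumes "e \<in> E" "e' \<in> E" "(i, e) \<noteq> (j, e')"
  shows "path_of (ERep i e) - path_of (ERep j e') \<noteq> {}"
proof
  assume h: "path_of (ERep i e) - path_of (ERep j e') = {}"
  have sub: "u \<in> e'" "i = j" if "u \<in> e" for u
  proof -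
    have "Pendant (c u) (slot i u) \<in> path_of (ERep i e)" using that by (auto simp: Pendant_in_ERep)
    then have "Pendant (c u) (slot i u) \<in> path_of (ERep j e')" using h by blast
    then obtain u' where "u' \<in> e'" "slot i u = slot j u'" by (auto simp: Pendant_in_ERep)
    then have "i = j \<and> u = u'" using slot_eq_iff edge_vertex assms that by blast
    then show "u \<in> e'" "i = j" using \<open>u' \<in> e'\<close> by auto
  qed
  obtain u w where uw: "e = {u, w}" "u \<noteq> w" "u \<in> V" "w \<in> V" using edge_obtain[OF assms(1)] by blast
  have ij: "i = j" using sub uw by blast
  have "e \<subseteq> e'" using sub by blast
  moreover have "card e = 2" "card e' = 2" using sgraph_VE assms by (auto simp: sgraph_def)
  moreover have "finite e'" using \<open>card e' = 2\<close> card.infinite by fastforce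
  ultimately have "e = e'" by (metis card_subset_eq)
  then show False using assms(3) ij by simp
qed

lemma clique_not_subset:
  assumes "a \<in> blocked_clique V E" "b \<in> blocked_clique V E" "a \<noteq> b"
  shows "path_of a - path_of b \<noteq> {}"
proof -
  consider (BB) i v j w where "a = Bro i v" "b = Bro j w" "i < 6" "j < 6" "v \<in> V" "w \<in> V"
    | (BE) i v j e where "a = Bro i v" "b = ERep j e" "i < 6" "j < 6" "v \<in> V" "e \<in> E"
    | (EB) i e j v where "a = ERep i e" "b = Bro j v" "i < 6" "j < 6" "e \<in> E" "v \<in> V"
    | (EE) i e j e' where "a = ERep i e" "b = ERep j e'" "i < 6" "j < 6" "e \<in> E" "e' \<in> E"
    using assms(1,2) unfolding blocked_clique_def by blast
  then show ?thesis
  proof cases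
    case BB then show ?thesis using Bro_not_subset_Bro[of v w i j] assms(3) by blast
  next
    case BE then show ?thesis using Bro_not_subset_ERep[of i j v e] by blast
  next
    case EB then show ?thesis using ERep_not_subset_Bro[of j i v e] by blast
  next
    case EE then show ?thesis using ERep_not_subset_ERep[of e e' i j] assms(3) by blast
  qed
qed

lemma clique_overlap:
  assumes "x \<in> blocked_clique V E" "y \<in> blocked_clique V E" "x \<noteq> y"
  shows "overlap (path_of x) (path_of y)"
proof -
  have "Centre \<in> path_of x" "Centre \<in> path_of y"
    using assms(1,2) Centre_in_clique by (auto simp: blocked_clique_def)
  then show ?thesis using clique_not_subset assms unfolding overlap_def by blast
qed

lemma VRep_relation:
  assumes v: "v \<in> V" "i < 6" and y: "y \<in> blocked_V V E" "y \<noteq> VRep i v"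
  shows "({VRep i v, y} \<in> blocked_E V E \<longrightarrow> overlap (path_of (VRep i v)) (path_of y))
       \<and> ({VRep i v, y} \<notin> blocked_E V E \<longrightarrow> path_of (VRep i v) \<inter> path_of y = {})"
proof -
  have "(\<exists>j w. y = VRep j w \<and> j < 6 \<and> w \<in> V) \<or> (\<exists>j w. y = Bro j w \<and> j < 6 \<and> w \<in> V)
     \<or> (\<exists>j e. y = ERep j e \<and> j < 6 \<and> e \<in> E)"
    using y(1) unfolding blocked_V_def by blast
  then show ?thesis
  proof (elim disjE exE conjE)
    fix j w assume h: "y = VRep j w" "j < 6" "w \<in> V"
    then have "(i, v) \<noteq> (j, w)" using y(2) by auto
    then show ?thesis
      using VRep_VRep_disjoint[OF v(1) h(3)] blocked_E_not_vertex_vertex[of i v j w V E] h(1) by simp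
  next
    fix j w assume h: "y = Bro j w" "j < 6" "w \<in> V"
    show ?thesis
    proof (cases "(i, v) = (j, w)")
      case True
      then show ?thesis using VRep_Bro_overlap[of i v] blocked_E_vertex_brother[OF v(2) v(1), of E] h(1) by simp
    next
      case False
      then show ?thesis using VRep_Bro_disjoint[OF v(1) h(3) False] blocked_E_not_vertex_brother[OF False] h(1) by simp
    qed
  next
    fix j e assume h: "y = ERep j e" "j < 6" "e \<in> E"
    show ?thesis
    proof (cases "i = j \<and> v \<in> e")
      case True
      then show ?thesis using VRep_ERep_overlap[of v e i] blocked_E_vertex_edge[OF v(2) h(3), of v V] h(1) by simp
    next
      case False
      then show ?thesis using VRep_ERep_disjoint[OF v(1) h(3) False] blocked_E_vertex_edgeD[of i v j e V E] h(1) by auto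
    qed
  qed
qed

lemma path_of_relation:
  assumes x: "x \<in> blocked_V V E" and y: "y \<in> blocked_V V E" and xy: "x \<noteq> y"
  shows "({x, y} \<in> blocked_E V E \<longrightarrow> overlap (path_of x) (path_of y))
       \<and> ({x, y} \<notin> blocked_E V E \<longrightarrow> path_of x \<inter> path_of y = {})"
proof -
  consider (V1) i v where "x = VRep i v" "i < 6" "v \<in> V" | (K1) "x \<in> blocked_clique V E" using blocked_V_cases[OF x] by blast
  then show ?thesis
  proof cases
    case V1 then show ?thesis using VRep_relation[of v i y] y xy by simp
  next
    case K1
    consider (V2) j w where "y = VRep j w" "j < 6" "w \<in> V" | (K2) "y \<in> blocked_clique V E" using blocked_V_cases[OF y] by blast
    then show ?thesis
    proof cases
      case V2
      then have "({y, x} \<in> blocked_E V E \<longrightarrow> overlap (path_of y) (path_of x))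
          \<and> ({y, x} \<notin> blocked_E V E \<longrightarrow> path_of y \<inter> path_of x = {})"
        using VRep_relation[of w j x] x xy by simp
      then show ?thesis by (simp add: insert_commute Int_commute overlap_commute)
    next
      case K2 then show ?thesis using blocked_E_clique[OF K1 K2 xy] clique_overlap[OF K1 K2 xy] by simp
    qed
  qed
qed

lemma path_model_overlap: "path_model overlap spT spF (blocked_V V E) (blocked_E V E) path_of"
  unfolding path_model_def
proof (intro conjI ballI impI)
  show "is_path_set spT spF (path_of x)" if "x \<in> blocked_V V E" for x
    using that path_set_VRep path_set_Bro path_set_ERep unfolding blocked_V_def by blast
  show "{x, y} \<in> blocked_E V E \<longleftrightarrow> overlap (path_of x) (path_of y)"
    if "x \<in> blocked_V V E" "y \<in> blocked_V V E" "x \<noteq> y" for x y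
    using path_of_relation[OF that] overlap_imp_Int_nonempty by blast
qed

lemma path_model_intersection:
  "path_model (\<lambda>A B. A \<inter> B \<noteq> {}) spT spF (blocked_V V E) (blocked_E V E) path_of"
  unfolding path_model_def
proof (intro conjI ballI impI)
  show "is_path_set spT spF (path_of x)" if "x \<in> blocked_V V E" for x
    using that path_model_overlap by (simp add: path_model_def)
  show "{x, y} \<in> blocked_E V E \<longleftrightarrow> path_of x \<inter> path_of y \<noteq> {}"
    if "x \<in> blocked_V V E" "y \<in> blocked_V V E" "x \<noteq> y" for x y
    using path_of_relation[OF that] overlap_imp_Int_nonempty by blast
qed

lemma blocked_path_graphs:
  "overlap_path_graph k (blocked_V V E) (blocked_E V E) \<and> intersection_path_graph k (blocked_V V E) (blocked_E V E)"
proof -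
  have deg: "max_degree_le k spT spF" unfolding spT_def spF_def by (rule max_degree_spider[OF k3])
  have inj: "inj (to_nat :: spider_node \<Rightarrow> nat)" by simp
  show ?thesis
    unfolding overlap_path_graph_iff intersection_path_graph_iff
    using nat_path_model_of_countable[OF is_tree_spT deg path_model_overlap overlap_image_iff[OF inj]]
      nat_path_model_of_countable[where R' = "\<lambda>A B. A \<inter> B \<noteq> {}",
        OF is_tree_spT deg path_model_intersection image_Int_nonempty_iff[OF inj]]
    by blast
qed

end

lemma blocked_path_graphs_if_colourable:
  assumes k: "k \<ge> 3" and G: "sgraph V E" and col: "colourable k V E"
  shows "overlap_path_graph k (blocked_V V E) (blocked_E V E) \<and> intersection_path_graph k (blocked_V V E) (blocked_E V E)"
proof -
  obtain c :: "'a \<Rightarrow> nat" where "\<forall>v\<in>V. c v < k" "\<forall>e\<in>E. \<forall>u v. e = {u, v} \<longrightarrow> c u \<noteq> c v"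
    using col unfolding colourable_def by blast
  moreover obtain idx where "bij_betw idx V {0..<card V}"
    using G ex_bij_betw_finite_nat[of V] by (auto simp: sgraph_def)
  ultimately interpret spider_model V E k c idx using G k by unfold_locales blast+
  show ?thesis by (rule blocked_path_graphs)
qed

theorem lemma11:
  fixes k :: nat and V :: "'a set" and E :: "'a set set"
  assumes "k \<ge> 3" and "sgraph V E" and "k_connected 3 V E"
  shows "(overlap_path_graph k (blocked_V V E) (blocked_E V E) \<longleftrightarrow> colourable k V E)
       \<and> (intersection_path_graph k (blocked_V V E) (blocked_E V E) \<longleftrightarrow> colourable k V E)"
proof -
  have "V \<noteq> {}" using assms(3) by (auto simp: k_connected_def)
  then show ?thesis
    using colourable_if_overlap_path_graph[OF assms(2)] colourable_if_intersection_path_graph[OF assms(2)]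
      blocked_path_graphs_if_colourable[OF assms(1,2)] by blast
qed

end
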